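(* The UCB-LP and the Compact LP defined in the context have the same optimal objective value. Furthermore, the optimal values of the dual variables associated with the resource constraints (the constraints indexed by $k\in\mathcal K$) in the UCB-LP and in the Compact LP are the same.
   Context: Let $\mathcal N=\{1,\dots,N\}$ and $\mathcal K=\{1,\dots,K\}$. Data: $\hat v_i>0$, $r_i\in[0,1]$, $a(i,k)\in[0,1]$ for $i\in\mathcal N,k\in\mathcal K$, $c(k)>0$, $\omega\in[0,1)$, and $\varepsilon_i=\varepsilon(n_i)=(\sqrt N+1)\Psi/\sqrt{n_i}$ with positive integers $n_i$ and a constant $\Psi>0$. UCB-LP (variables $y(S)$, $S\subseteq\mathcal N$): maximize $\sum_{S\subseteq\mathcal N}\sum_{i\in S}r_i\Big(\frac{\hat v_i}{1+\sum_{j\in S}\hat v_j}+\varepsilon_i\Big)y(S)$ subject to $\sum_{S}\sum_{i\in S}a(i,k)\Big(\frac{\hat v_i}{1+\sum_{j\in S}\hat v_j}-\varepsilon_i\Big)y(S)\le(1-\omega)c(k)$ for all $k$, $\sum_S y(S)=1$, $y(S)\ge0$. Compact LP (variables $x_0\in\mathbb R$, $x\in\mathbb R_+^N$, $y\in\mathbb R_+^{N\times N}$): maximize $\sum_{i\in\mathcal N}r_i\big[(\hat v_i+\varepsilon_i)x_i+\varepsilon_i\sum_{j\in\mathcal N}\hat v_jy_{ij}\big]$ subject to $\sum_{i}a(i,k)\big[(\hat v_i-\varepsilon_i)x_i-\varepsilon_i\sum_j\hat v_jy_{ij}\big]\le(1-\omega)c(k)$ for all $k$; $x_0+\sum_i\hat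 v_ix_i=1$; $x_i\le x_0$ for all $i$; $y_{ij}\le\min\{x_i,x_j\}$ for all $i,j$. *)

theory Defs
  imports Complex_Main "HOL-Library.FuncSet"
begin

text \<open>A linear program: maximize  sum_{v in V} obj v * x v  subject to
  sum_{v in V} mat c v * x v  (=, if c in eqs; <= otherwise)  rhs c  for every c in cons,
  x v >= 0 for every v in V that is not free (free variables are unrestricted in sign).\<close>

record ('v, 'c) lp =
  lp_vars :: "'v set"
  lp_cons :: "'c set"
  lp_eqs  :: "'c set"
  lp_free :: "'v set"
  lp_obj  :: "'v \<Rightarrow> real"
  lp_mat  :: "'c \<Rightarrow> 'v \<Rightarrow> real"
  lp_rhs  :: "'c \<Rightarrow> real"

definition lp_feasible :: "('v, 'c) lp \<Rightarrow> ('v \<Rightarrow> real) \<Rightarrow> bool" where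
  "lp_feasible P x \<longleftrightarrow>
     (\<forall>v\<in>lp_vars P - lp_free P. 0 \<le> x v) \<and>
     (\<forall>c\<in>lp_cons P.
        (if c \<in> lp_eqs P then (\<Sum>v\<in>lp_vars P. lp_mat P c v * x v) = lp_rhs P c
         else (\<Sum>v\<in>lp_vars P. lp_mat P c v * x v) \<le> lp_rhs P c))"

definition lp_objective :: "('v, 'c) lp \<Rightarrow> ('v \<Rightarrow> real) \<Rightarrow> real" where
  "lp_objective P x = (\<Sum>v\<in>lp_vars P. lp_obj P v * x v)"

definition lp_value :: "('v, 'c) lp \<Rightarrow> real" where
  "lp_value P = Sup {lp_objective P x | x. lp_feasible P x}"

definition lp_dual_feasible :: "('v, 'c) lp \<Rightarrow> ('c \<Rightarrow> real) \<Rightarrow> bool" where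
  "lp_dual_feasible P u \<longleftrightarrow>
     (\<forall>c\<in>lp_cons P - lp_eqs P. 0 \<le> u c) \<and>
     (\<forall>v\<in>lp_vars P.
        (if v \<in> lp_free P then (\<Sum>c\<in>lp_cons P. lp_mat P c v * u c) = lp_obj P v
         else lp_obj P v \<le> (\<Sum>c\<in>lp_cons P. lp_mat P c v * u c)))"

definition lp_dual_objective :: "('v, 'c) lp \<Rightarrow> ('c \<Rightarrow> real) \<Rightarrow> real" where
  "lp_dual_objective P u = (\<Sum>c\<in>lp_cons P. lp_rhs P c * u c)"

definition lp_dual_optimal :: "('v, 'c) lp \<Rightarrow> ('c \<Rightarrow> real) \<Rightarrow> bool" where
  "lp_dual_optimal P u \<longleftrightarrow> lp_dual_feasible P u \<and>
     (\<forall>u'. lp_dual_feasible P u' \<longrightarrow> lp_dual_objective P u \<le> lp_dual_objective P u')"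

text \<open>Variables: subsets S of {1..N}. Constraints: Some k (resource k, k in {1..K}, <=)
  and None (the normalization sum_S y(S) = 1).\<close>

definition mnl_prob :: "(nat \<Rightarrow> real) \<Rightarrow> nat set \<Rightarrow> nat \<Rightarrow> real" where
  "mnl_prob vhat S i = vhat i / (1 + (\<Sum>j\<in>S. vhat j))"

definition ucb_lp ::
  "nat \<Rightarrow> nat \<Rightarrow> (nat \<Rightarrow> real) \<Rightarrow> (nat \<Rightarrow> real) \<Rightarrow> (nat \<Rightarrow> nat \<Rightarrow> real) \<Rightarrow> (nat \<Rightarrow> real)
   \<Rightarrow> real \<Rightarrow> (nat \<Rightarrow> real) \<Rightarrow> (nat set, nat option) lp" where
  "ucb_lp N K vhat r a c \<omega> eps =
     \<lparr> lp_vars = Pow {1..N},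
       lp_cons = insert None (Some ` {1..K}),
       lp_eqs = {None},
       lp_free = {},
       lp_obj = (\<lambda>S. \<Sum>i\<in>S. r i * (mnl_prob vhat S i + eps i)),
       lp_mat = (\<lambda>con S. case con of
                   None \<Rightarrow> 1
                 | Some k \<Rightarrow> (\<Sum>i\<in>S. a i k * (mnl_prob vhat S i - eps i))),
       lp_rhs = (\<lambda>con. case con of None \<Rightarrow> 1 | Some k \<Rightarrow> (1 - \<omega>) * c k) \<rparr>"

datatype cvar = X0 | X nat | Y nat nat

text \<open>Constraints: Res k (resource k), Norm (x_0 + sum_i vhat_i x_i = 1),
  Cap i (x_i <= x_0), YI i j (y_ij <= x_i), YJ i j (y_ij <= x_j); the last two together
  express y_ij <= min{x_i, x_j}.\<close>
datatype ccon = Res nat | Norm | Cap nat | YI nat nat | YJ nat nat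

fun compact_obj :: "(nat \<Rightarrow> real) \<Rightarrow> (nat \<Rightarrow> real) \<Rightarrow> (nat \<Rightarrow> real) \<Rightarrow> cvar \<Rightarrow> real" where
  "compact_obj vhat r eps X0 = 0"
| "compact_obj vhat r eps (X i) = r i * (vhat i + eps i)"
| "compact_obj vhat r eps (Y i j) = r i * eps i * vhat j"

fun compact_mat ::
  "(nat \<Rightarrow> real) \<Rightarrow> (nat \<Rightarrow> nat \<Rightarrow> real) \<Rightarrow> (nat \<Rightarrow> real) \<Rightarrow> ccon \<Rightarrow> cvar \<Rightarrow> real" where
  "compact_mat vhat a eps (Res k) X0 = 0"
| "compact_mat vhat a eps (Res k) (X i) = a i k * (vhat i - eps i)"
| "compact_mat vhat a eps (Res k) (Y i j) = - (a i k * eps i * vhat j)"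
| "compact_mat vhat a eps Norm X0 = 1"
| "compact_mat vhat a eps Norm (X i) = vhat i"
| "compact_mat vhat a eps Norm (Y i j) = 0"
| "compact_mat vhat a eps (Cap i) X0 = -1"
| "compact_mat vhat a eps (Cap i) (X i') = (if i' = i then 1 else 0)"
| "compact_mat vhat a eps (Cap i) (Y i' j') = 0"
| "compact_mat vhat a eps (YI i j) X0 = 0"
| "compact_mat vhat a eps (YI i j) (X i') = (if i' = i then -1 else 0)"
| "compact_mat vhat a eps (YI i j) (Y i' j') = (if i' = i \<and> j' = j then 1 else 0)"
| "compact_mat vhat a eps (YJ i j) X0 = 0"
| "compact_mat vhat a eps (YJ i j) (X i') = (if i' = j then -1 else 0)"
| "compact_mat vhat a eps (YJ i j) (Y i' j') = (if i' = i \<and> j' = j then 1 else 0)"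

fun compact_rhs :: "nat \<Rightarrow> (nat \<Rightarrow> real) \<Rightarrow> real \<Rightarrow> ccon \<Rightarrow> real" where
  "compact_rhs K c \<omega> (Res k) = (1 - \<omega>) * c k"
| "compact_rhs K c \<omega> Norm = 1"
| "compact_rhs K c \<omega> (Cap i) = 0"
| "compact_rhs K c \<omega> (YI i j) = 0"
| "compact_rhs K c \<omega> (YJ i j) = 0"

definition compact_lp ::
  "nat \<Rightarrow> nat \<Rightarrow> (nat \<Rightarrow> real) \<Rightarrow> (nat \<Rightarrow> real) \<Rightarrow> (nat \<Rightarrow> nat \<Rightarrow> real) \<Rightarrow> (nat \<Rightarrow> real)
   \<Rightarrow> real \<Rightarrow> (nat \<Rightarrow> real) \<Rightarrow> (cvar, ccon) lp" where
  "compact_lp N K vhat r a c \<omega> eps =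
     \<lparr> lp_vars = {X0} \<union> X ` {1..N} \<union> {Y i j | i j. i \<in> {1..N} \<and> j \<in> {1..N}},
       lp_cons = Res ` {1..K} \<union> {Norm} \<union> Cap ` {1..N}
                 \<union> {YI i j | i j. i \<in> {1..N} \<and> j \<in> {1..N}}
                 \<union> {YJ i j | i j. i \<in> {1..N} \<and> j \<in> {1..N}},
       lp_eqs = {Norm},
       lp_free = {X0},
       lp_obj = compact_obj vhat r eps,
       lp_mat = compact_mat vhat a eps,
       lp_rhs = compact_rhs K c \<omega> \<rparr>"

end

theory Submission
  imports Defs "HOL-Library.Nat_Bijection"
begin

text \<open>For a distribution \<open>y\<close> on assortments put \<open>w(S) = y(S) / (1 + V(S))\<close>, where \<open>V(S)\<close> is the
  sum of \<open>vhat\<close> over \<open>S\<close>.  The objective and the resource rows of the UCB-LP at \<open>y\<close> are then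
  linear in the moments \<open>x\<^sub>0 = \<Sum>\<^sub>S w(S)\<close>, \<open>x\<^sub>i = \<Sum>\<^sub>S\<^sub>\<ni>\<^sub>i w(S)\<close>,
  \<open>y\<^sub>i\<^sub>j = \<Sum>\<^sub>S\<^sub>\<ni>\<^sub>i\<^sub>,\<^sub>j w(S)\<close>, with exactly the coefficients of the compact LP, so every
  UCB-feasible point gives a compact-feasible point of the same value.  Conversely, the
  \<open>x\<close>-part of a compact-feasible point has a layer-cake decomposition into assortments, whose
  moments \<open>y\<^sub>i\<^sub>j = min(x\<^sub>i, x\<^sub>j)\<close> dominate the given ones; since \<open>y\<^sub>i\<^sub>j\<close> has a nonnegative
  objective and a nonpositive resource coefficient, this yields a UCB-feasible point that is at
  least as good.

  For the duals, weak duality for the compact LP at the point of a single assortment \<open>S\<close> is the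
  dual constraint of the UCB-LP for \<open>S\<close>, with the same resource prices and objective.
  Conversely, for the resource prices of a UCB dual solution the compact LP with the resource
  constraints moved into the objective is bounded by the price of the normalisation; LP strong
  duality, proved here from Farkas' lemma, then supplies the multipliers of the remaining compact
  constraints.\<close>

section \<open>Farkas' lemma by Fourier-Motzkin elimination\<close>

lemma fourier_motzkin_lift:
  fixes a :: "'i \<Rightarrow> 'v \<Rightarrow> real"
  assumes "finite I" "finite V" "v \<notin> V"
    and zero: "\<And>i. i \<in> I \<Longrightarrow> a i v = 0 \<Longrightarrow> (\<Sum>u\<in>V. a i u * x u) \<le> b i"
    and pair: "\<And>p n. p \<in> I \<Longrightarrow> n \<in> I \<Longrightarrow> 0 < a p v \<Longrightarrow> a n v < 0 \<Longrightarrow>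
      - a n v * (\<Sum>u\<in>V. a p u * x u) + a p v * (\<Sum>u\<in>V. a n u * x u) \<le> - a n v * b p + a p v * b n"
  shows "\<exists>t. \<forall>i\<in>I. (\<Sum>u\<in>insert v V. a i u * (x(v := t)) u) \<le> b i"
proof -
  define slack where "slack i = (b i - (\<Sum>u\<in>V. a i u * x u)) / a i v" for i
  define Ip where "Ip = {p\<in>I. 0 < a p v}"
  define In where "In = {n\<in>I. a n v < 0}"
  have fin: "finite Ip" "finite In" using \<open>finite I\<close> by (simp_all add: Ip_def In_def)
  have slack_le: "slack n \<le> slack p" if "p \<in> Ip" "n \<in> In" for p n
    using pair[of p n] that
    by (simp add: Ip_def In_def slack_def divide_simps) (simp add: algebra_simps)
  obtain t where lower: "\<forall>n\<in>In. slack n \<le> t" and upper: "\<forall>p\<in>Ip. t \<le> slack p"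
  proof (cases "In = {}")
    case True
    then show ?thesis using fin by (intro that[of "Min (insert 0 (slack ` Ip))"]) auto
  next
    case False
    then show ?thesis using fin slack_le by (intro that[of "Max (slack ` In)"]) auto
  qed
  have "(\<Sum>u\<in>insert v V. a i u * (x(v := t)) u) \<le> b i" if "i \<in> I" for i
  proof -
    have "(\<Sum>u\<in>insert v V. a i u * (x(v := t)) u) = a i v * t + (\<Sum>u\<in>V. a i u * x u)"
      using assms(2,3) by simp (intro sum.cong, auto)
    moreover consider "a i v = 0" | "0 < a i v" | "a i v < 0" by linarith
    then have "a i v * t + (\<Sum>u\<in>V. a i u * x u) \<le> b i"
    proof cases
      case 1 then show ?thesis using zero[OF that] by simp
    next
      case 2 then show ?thesis using upper that by (auto simp: Ip_def slack_def field_simps)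
    next
      case 3 then show ?thesis using lower that by (auto simp: In_def slack_def field_simps)
    qed
    ultimately show ?thesis by simp
  qed
  then show ?thesis by blast
qed

text \<open>Fourier-Motzkin elimination of a variable with column \<open>\<alpha>\<close> from the rows \<open>I\<close>:
  row \<open>2 i\<close> of the new system is row \<open>i\<close> (when \<open>\<alpha> i = 0\<close>), and row \<open>2 \<langle>p, n\<rangle> + 1\<close> is the
  nonnegative combination of the rows \<open>p\<close> (with \<open>\<alpha> p > 0\<close>) and \<open>n\<close> (with \<open>\<alpha> n < 0\<close>) that
  cancels the variable.  Coding rows by natural numbers keeps the index type fixed.\<close>

definition fm_rows :: "(nat \<Rightarrow> real) \<Rightarrow> nat set \<Rightarrow> nat set" where
  "fm_rows \<alpha> I = (\<lambda>i. 2 * i) ` {i\<in>I. \<alpha> i = 0}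
     \<union> (\<lambda>(p, n). Suc (2 * prod_encode (p, n))) ` ({p\<in>I. 0 < \<alpha> p} \<times> {n\<in>I. \<alpha> n < 0})"

definition fm_comb :: "(nat \<Rightarrow> real) \<Rightarrow> (nat \<Rightarrow> real) \<Rightarrow> nat \<Rightarrow> real" where
  "fm_comb \<alpha> F j = (if even j then F (j div 2)
     else case prod_decode (j div 2) of (p, n) \<Rightarrow> - \<alpha> n * F p + \<alpha> p * F n)"

definition fm_mult :: "(nat \<Rightarrow> real) \<Rightarrow> nat set \<Rightarrow> (nat \<Rightarrow> real) \<Rightarrow> nat \<Rightarrow> real" where
  "fm_mult \<alpha> I l i =
     (if \<alpha> i = 0 then l (2 * i)
      else if 0 < \<alpha> i then (\<Sum>n\<in>{n\<in>I. \<alpha> n < 0}. l (Suc (2 * prod_encode (i, n))) * - \<alpha> n)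
      else (\<Sum>p\<in>{p\<in>I. 0 < \<alpha> p}. l (Suc (2 * prod_encode (p, i))) * \<alpha> p))"

lemma fm_comb_even [simp]: "fm_comb \<alpha> F (2 * i) = F i"
  by (simp add: fm_comb_def)

lemma fm_comb_odd [simp]:
  "fm_comb \<alpha> F (Suc (2 * prod_encode (p, n))) = - \<alpha> n * F p + \<alpha> p * F n"
  by (simp add: fm_comb_def)

lemma finite_fm_rows: "finite I \<Longrightarrow> finite (fm_rows \<alpha> I)"
  by (simp add: fm_rows_def)

lemma fm_rowsI:
  "i \<in> I \<Longrightarrow> \<alpha> i = 0 \<Longrightarrow> 2 * i \<in> fm_rows \<alpha> I"
  "p \<in> I \<Longrightarrow> 0 < \<alpha> p \<Longrightarrow> n \<in> I \<Longrightarrow> \<alpha> n < 0 \<Longrightarrow> Suc (2 * prod_encode (p, n)) \<in> fm_rows \<alpha> I"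
  unfolding fm_rows_def by (blast, intro UnI2 image_eqI[where x = "(p, n)"]) auto

lemma fm_comb_self: "j \<in> fm_rows \<alpha> I \<Longrightarrow> fm_comb \<alpha> \<alpha> j = 0"
  by (auto simp: fm_rows_def)

lemma sum_fm_comb_right:
  "(\<Sum>u\<in>V. fm_comb \<alpha> (\<lambda>i. a i u) j * x u) = fm_comb \<alpha> (\<lambda>i. \<Sum>u\<in>V. a i u * x u) j"
  by (simp add: fm_comb_def split: prod.split)
    (simp add: sum_distrib_left sum_subtractf[symmetric] left_diff_distrib mult.assoc)

lemma fm_mult_nonneg:
  assumes "\<forall>j\<in>fm_rows \<alpha> I. 0 \<le> l j" "i \<in> I"
  shows "0 \<le> fm_mult \<alpha> I l i"
proof -
  have "0 \<le> l (Suc (2 * prod_encode (p, n)))" if "p \<in> I" "0 < \<alpha> p" "n \<in> I" "\<alpha> n < 0" for p n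
    using assms(1) fm_rowsI(2)[OF that] by blast
  moreover have "0 \<le> l (2 * i)" if "\<alpha> i = 0"
    using assms fm_rowsI(1)[of i I \<alpha>] that by blast
  ultimately show ?thesis
    using assms(2) by (auto simp: fm_mult_def intro!: sum_nonneg mult_nonneg_nonpos)
qed

lemma sum_fm_comb:
  assumes "finite I"
  shows "(\<Sum>j\<in>fm_rows \<alpha> I. l j * fm_comb \<alpha> F j) = (\<Sum>i\<in>I. fm_mult \<alpha> I l i * F i)"
proof -
  define I0 Ip In where "I0 = {i\<in>I. \<alpha> i = 0}" and "Ip = {p\<in>I. 0 < \<alpha> p}" and "In = {n\<in>I. \<alpha> n < 0}"
  define code where "code = (\<lambda>(p, n). Suc (2 * prod_encode (p, n)))"
  have fin: "finite I0" "finite Ip" "finite In" using assms by (simp_all add: I0_def Ip_def In_def)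
  have inj_code: "inj_on code A" for A
    by (rule inj_onI) (auto simp: code_def dest: inj_onD[OF inj_prod_encode, of "(_, _)" "(_, _)"])
  have rows: "fm_rows \<alpha> I = (\<lambda>i. 2 * i) ` I0 \<union> code ` (Ip \<times> In)"
    by (simp add: fm_rows_def I0_def Ip_def In_def code_def)
  have disj: "(\<lambda>i. 2 * i) ` I0 \<inter> code ` (Ip \<times> In) = {}"
    by (auto simp: code_def) presburger
  have "(\<Sum>j\<in>fm_rows \<alpha> I. l j * fm_comb \<alpha> F j)
      = (\<Sum>j\<in>(\<lambda>i. 2 * i) ` I0. l j * fm_comb \<alpha> F j) + (\<Sum>j\<in>code ` (Ip \<times> In). l j * fm_comb \<alpha> F j)"
    unfolding rows using fin disj by (intro sum.union_disjoint) auto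
  also have "\<dots> = (\<Sum>i\<in>I0. l (2 * i) * F i)
      + (\<Sum>(p, n)\<in>Ip \<times> In. l (code (p, n)) * (- \<alpha> n * F p + \<alpha> p * F n))"
    by (simp add: sum.reindex inj_on_def sum.reindex[OF inj_code]) (intro sum.cong, auto simp: code_def)
  also have "(\<Sum>(p, n)\<in>Ip \<times> In. l (code (p, n)) * (- \<alpha> n * F p + \<alpha> p * F n))
      = (\<Sum>p\<in>Ip. \<Sum>n\<in>In. l (code (p, n)) * - \<alpha> n * F p)
      + (\<Sum>p\<in>Ip. \<Sum>n\<in>In. l (code (p, n)) * \<alpha> p * F n)"
    unfolding sum.cartesian_product[symmetric] sum.distrib[symmetric]
    by (intro sum.cong refl) (simp add: algebra_simps)
  also have "\<dots> = (\<Sum>p\<in>Ip. (\<Sum>n\<in>In. l (code (p, n)) * - \<alpha> n) * F p)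
      + (\<Sum>n\<in>In. (\<Sum>p\<in>Ip. l (code (p, n)) * \<alpha> p) * F n)"
    by (simp add: sum_distrib_right, rule sum.swap)
  also have "(\<Sum>i\<in>I0. l (2 * i) * F i) + \<dots> = (\<Sum>i\<in>I0. fm_mult \<alpha> I l i * F i)
      + ((\<Sum>i\<in>Ip. fm_mult \<alpha> I l i * F i) + (\<Sum>i\<in>In. fm_mult \<alpha> I l i * F i))"
    by (intro arg_cong2[where f = "(+)"] sum.cong refl)
      (auto simp: I0_def Ip_def In_def fm_mult_def code_def)
  also have "\<dots> = (\<Sum>i\<in>I0 \<union> (Ip \<union> In). fm_mult \<alpha> I l i * F i)"
    using fin by (simp add: sum.union_disjoint disjoint_iff I0_def Ip_def In_def)
  also have "I0 \<union> (Ip \<union> In) = I" by (auto simp: I0_def Ip_def In_def)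
  finally show ?thesis .
qed

lemma fm_eliminated_infeasible:
  fixes a :: "nat \<Rightarrow> 'v \<Rightarrow> real"
  assumes "finite I" "finite V" "v \<notin> V"
    and infeasible: "\<not> (\<exists>x. \<forall>i\<in>I. (\<Sum>u\<in>insert v V. a i u * x u) \<le> b i)"
  defines "\<alpha> \<equiv> \<lambda>i. a i v"
  shows "\<not> (\<exists>x. \<forall>j\<in>fm_rows \<alpha> I. (\<Sum>u\<in>V. fm_comb \<alpha> (\<lambda>i. a i u) j * x u) \<le> fm_comb \<alpha> b j)"
proof
  assume "\<exists>x. \<forall>j\<in>fm_rows \<alpha> I. (\<Sum>u\<in>V. fm_comb \<alpha> (\<lambda>i. a i u) j * x u) \<le> fm_comb \<alpha> b j"
  then obtain x where x: "\<forall>j\<in>fm_rows \<alpha> I. fm_comb \<alpha> (\<lambda>i. \<Sum>u\<in>V. a i u * x u) j \<le> fm_comb \<alpha> b j"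
    by (auto simp: sum_fm_comb_right)
  have "\<exists>t. \<forall>i\<in>I. (\<Sum>u\<in>insert v V. a i u * (x(v := t)) u) \<le> b i"
  proof (rule fourier_motzkin_lift[OF assms(1-3)])
    show "(\<Sum>u\<in>V. a i u * x u) \<le> b i" if "i \<in> I" "a i v = 0" for i
      using bspec[OF x fm_rowsI(1)] that by (simp add: \<alpha>_def)
    show "- a n v * (\<Sum>u\<in>V. a p u * x u) + a p v * (\<Sum>u\<in>V. a n u * x u) \<le> - a n v * b p + a p v * b n"
      if "p \<in> I" "n \<in> I" "0 < a p v" "a n v < 0" for p n
      using bspec[OF x fm_rowsI(2)] that by (simp add: \<alpha>_def)
  qed
  with infeasible show False by blast
qed

lemma farkas_certificate_nat:
  fixes a :: "nat \<Rightarrow> 'v \<Rightarrow> real"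
  assumes "finite V" "finite I" "\<not> (\<exists>x. \<forall>i\<in>I. (\<Sum>u\<in>V. a i u * x u) \<le> b i)"
  shows "\<exists>l. (\<forall>i\<in>I. 0 \<le> l i) \<and> (\<forall>u\<in>V. (\<Sum>i\<in>I. l i * a i u) = 0) \<and> (\<Sum>i\<in>I. l i * b i) < 0"
  using assms
proof (induction V arbitrary: I a b rule: finite_induct)
  case empty
  then obtain i where i: "i \<in> I" "b i < 0" by (force simp: not_le)
  with empty.prems(1) show ?case
    by (intro exI[of _ "\<lambda>j. of_bool (j = i)"]) (simp add: if_distrib[of "\<lambda>x. x * b _"] cong: if_cong)
next
  case (insert v V)
  let ?\<alpha> = "\<lambda>i. a i v"
  from insert.IH[OF finite_fm_rows[OF insert.prems(1)]
      fm_eliminated_infeasible[OF insert.prems(1) insert.hyps insert.prems(2)]]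
  obtain l where l: "\<forall>j\<in>fm_rows ?\<alpha> I. 0 \<le> l j"
    "\<forall>u\<in>V. (\<Sum>j\<in>fm_rows ?\<alpha> I. l j * fm_comb ?\<alpha> (\<lambda>i. a i u) j) = 0"
    "(\<Sum>j\<in>fm_rows ?\<alpha> I. l j * fm_comb ?\<alpha> b j) < 0"
    by blast
  have "(\<Sum>j\<in>fm_rows ?\<alpha> I. l j * fm_comb ?\<alpha> ?\<alpha> j) = 0"
    by (rule sum.neutral) (simp add: fm_comb_self)
  then show ?case
    using l fm_mult_nonneg[OF l(1)] sum_fm_comb[OF insert.prems(1), of l ?\<alpha>]
    by (intro exI[of _ "fm_mult ?\<alpha> I l"]) auto
qed

lemma farkas_certificate:
  fixes a :: "'i \<Rightarrow> 'v \<Rightarrow> real"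
  assumes "finite V" "finite I" "\<not> (\<exists>x. \<forall>i\<in>I. (\<Sum>u\<in>V. a i u * x u) \<le> b i)"
  shows "\<exists>l. (\<forall>i\<in>I. 0 \<le> l i) \<and> (\<forall>u\<in>V. (\<Sum>i\<in>I. l i * a i u) = 0) \<and> (\<Sum>i\<in>I. l i * b i) < 0"
proof -
  obtain f :: "'i \<Rightarrow> nat" where f: "inj_on f I"
    using finite_imp_inj_to_nat_seg[OF assms(2)] by blast
  let ?g = "the_inv_into I f"
  have g: "?g (f i) = i" if "i \<in> I" for i
    using f that by (rule the_inv_into_f_f)
  have "\<not> (\<exists>x. \<forall>j\<in>f ` I. (\<Sum>u\<in>V. a (?g j) u * x u) \<le> b (?g j))"
    using assms(3) by (auto simp: g)
  from farkas_certificate_nat[OF assms(1) finite_imageI[OF assms(2)] this] obtain l where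
    l: "\<forall>j\<in>f ` I. 0 \<le> l j" "\<forall>u\<in>V. (\<Sum>j\<in>f ` I. l j * a (?g j) u) = 0"
      "(\<Sum>j\<in>f ` I. l j * b (?g j)) < 0"
    by blast
  have pull_back: "(\<Sum>j\<in>f ` I. l j * h (?g j)) = (\<Sum>i\<in>I. (l \<circ> f) i * h i)" for h :: "'i \<Rightarrow> real"
    using f by (simp add: sum.reindex g cong: sum.cong)
  show ?thesis
  proof (intro exI[of _ "l \<circ> f"] conjI ballI)
    show "0 \<le> (l \<circ> f) i" if "i \<in> I" for i using l(1) that by simp
    show "(\<Sum>i\<in>I. (l \<circ> f) i * a i u) = 0" if "u \<in> V" for u
      using l(2) that pull_back[of "\<lambda>i. a i u"] by simp
    show "(\<Sum>i\<in>I. (l \<circ> f) i * b i) < 0" using l(3) pull_back[of b] by simp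
  qed
qed

section \<open>Linear programming duality\<close>

abbreviation lp_row :: "('v, 'c) lp \<Rightarrow> 'c \<Rightarrow> ('v \<Rightarrow> real) \<Rightarrow> real" where
  "lp_row P c x \<equiv> \<Sum>v\<in>lp_vars P. lp_mat P c v * x v"

abbreviation lp_col :: "('v, 'c) lp \<Rightarrow> 'v \<Rightarrow> ('c \<Rightarrow> real) \<Rightarrow> real" where
  "lp_col P v u \<equiv> \<Sum>c\<in>lp_cons P. lp_mat P c v * u c"

definition lp_scaled_feasible :: "('v, 'c) lp \<Rightarrow> real \<Rightarrow> ('v \<Rightarrow> real) \<Rightarrow> bool" where
  "lp_scaled_feasible P s z \<longleftrightarrow> (\<forall>v\<in>lp_vars P - lp_free P. 0 \<le> z v) \<and>
    (\<forall>c\<in>lp_cons P. if c \<in> lp_eqs P then lp_row P c z = s * lp_rhs P c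
                    else lp_row P c z \<le> s * lp_rhs P c)"

lemma lp_feasible_mix:
  assumes x0: "lp_feasible P x0" and z: "lp_scaled_feasible P s z" and "0 \<le> s" "0 < t"
  shows "lp_feasible P (\<lambda>v. (z v + t * x0 v) / (s + t))"
  unfolding lp_feasible_def
proof (intro conjI ballI)
  have "0 < s + t" using assms(3,4) by simp
  have lin: "(\<Sum>v\<in>lp_vars P. f v * ((z v + t * x0 v) / (s + t)))
      = ((\<Sum>v\<in>lp_vars P. f v * z v) + t * (\<Sum>v\<in>lp_vars P. f v * x0 v)) / (s + t)" for f
    by (simp add: sum_divide_distrib sum.distrib sum_distrib_left add_divide_distrib algebra_simps)
  fix c assume c: "c \<in> lp_cons P"
  have rows: "if c \<in> lp_eqs P then lp_row P c x0 = lp_rhs P c else lp_row P c x0 \<le> lp_rhs P c"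
    "if c \<in> lp_eqs P then lp_row P c z = s * lp_rhs P c else lp_row P c z \<le> s * lp_rhs P c"
    using x0 z c by (simp_all add: lp_feasible_def lp_scaled_feasible_def)
  show "if c \<in> lp_eqs P then lp_row P c (\<lambda>v. (z v + t * x0 v) / (s + t)) = lp_rhs P c
        else lp_row P c (\<lambda>v. (z v + t * x0 v) / (s + t)) \<le> lp_rhs P c"
  proof (cases "c \<in> lp_eqs P")
    case True
    then have "lp_row P c z + t * lp_row P c x0 = (s + t) * lp_rhs P c"
      using rows by (simp add: distrib_right)
    then show ?thesis using True \<open>0 < s + t\<close> unfolding lin by simp
  next
    case False
    then have "lp_row P c z \<le> s * lp_rhs P c" "t * lp_row P c x0 \<le> t * lp_rhs P c"
      using rows \<open>0 < t\<close> by auto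
    then have "lp_row P c z + t * lp_row P c x0 \<le> lp_rhs P c * (s + t)"
      by (simp add: algebra_simps)
    then show ?thesis using False \<open>0 < s + t\<close> unfolding lin by (simp add: pos_divide_le_eq)
  qed
next
  fix v assume "v \<in> lp_vars P - lp_free P"
  then show "0 \<le> (z v + t * x0 v) / (s + t)"
    using x0 z assms(3,4) by (simp add: lp_feasible_def lp_scaled_feasible_def)
qed

text \<open>Mixing \<open>z\<close> with a vanishing multiple of a feasible point treats \<open>s > 0\<close> and the recession
  directions \<open>s = 0\<close> at once.\<close>

lemma lp_scaled_feasible_objective_le:
  assumes x0: "lp_feasible P x0" and bounded: "\<And>x. lp_feasible P x \<Longrightarrow> lp_objective P x \<le> M"
    and z: "lp_scaled_feasible P s z" and "0 \<le> s"
  shows "lp_objective P z \<le> s * M"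
proof (rule field_le_epsilon)
  define d where "d = M - lp_objective P x0"
  have "0 \<le> d" using bounded[OF x0] by (simp add: d_def)
  fix e :: real assume "0 < e"
  define t where "t = e / (d + 1)"
  have "0 < t" "t * d \<le> e" using \<open>0 < e\<close> \<open>0 \<le> d\<close> by (simp_all add: t_def field_simps)
  have "0 < s + t" using \<open>0 \<le> s\<close> \<open>0 < t\<close> by simp
  have "lp_objective P (\<lambda>v. (z v + t * x0 v) / (s + t))
      = (lp_objective P z + t * lp_objective P x0) / (s + t)"
    by (simp add: lp_objective_def sum_divide_distrib sum.distrib sum_distrib_left add_divide_distrib
        algebra_simps)
  moreover have "lp_objective P (\<lambda>v. (z v + t * x0 v) / (s + t)) \<le> M"
    using bounded lp_feasible_mix[OF x0 z \<open>0 \<le> s\<close> \<open>0 < t\<close>] by blast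
  ultimately have "lp_objective P z \<le> s * M + t * d"
    using \<open>0 < s + t\<close> by (simp add: d_def pos_divide_le_eq algebra_simps)
  with \<open>t * d \<le> e\<close> show "lp_objective P z \<le> s * M + e" by simp
qed

text \<open>The dual feasibility conditions and the bound \<open>M\<close> on the dual objective, written as one
  system of inequalities \<open>\<Sum>\<^sub>c dual_coeff P i c * u c \<le> dual_bound P M i\<close> in the dual variables.\<close>

datatype ('c, 'v) dual_row = Dual_Nonneg 'c | Dual_Ge 'v | Dual_Le 'v | Dual_Bound

definition dual_rows :: "('v, 'c) lp \<Rightarrow> ('c, 'v) dual_row set" where
  "dual_rows P = Dual_Nonneg ` (lp_cons P - lp_eqs P) \<union> Dual_Ge ` lp_vars P
     \<union> Dual_Le ` (lp_vars P \<inter> lp_free P) \<union> {Dual_Bound}"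

fun dual_coeff :: "('v, 'c) lp \<Rightarrow> ('c, 'v) dual_row \<Rightarrow> 'c \<Rightarrow> real" where
  "dual_coeff P (Dual_Nonneg c') c = (if c = c' then -1 else 0)"
| "dual_coeff P (Dual_Ge v) c = - lp_mat P c v"
| "dual_coeff P (Dual_Le v) c = lp_mat P c v"
| "dual_coeff P Dual_Bound c = lp_rhs P c"

fun dual_bound :: "('v, 'c) lp \<Rightarrow> real \<Rightarrow> ('c, 'v) dual_row \<Rightarrow> real" where
  "dual_bound P M (Dual_Nonneg c) = 0"
| "dual_bound P M (Dual_Ge v) = - lp_obj P v"
| "dual_bound P M (Dual_Le v) = lp_obj P v"
| "dual_bound P M Dual_Bound = M"

lemma finite_dual_rows: "finite (lp_vars P) \<Longrightarrow> finite (lp_cons P) \<Longrightarrow> finite (dual_rows P)"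
  by (simp add: dual_rows_def)

lemma sum_dual_rows:
  assumes "finite (lp_vars P)" "finite (lp_cons P)"
  shows "(\<Sum>i\<in>dual_rows P. f i) = (\<Sum>c\<in>lp_cons P - lp_eqs P. f (Dual_Nonneg c))
    + (\<Sum>v\<in>lp_vars P. f (Dual_Ge v)) + (\<Sum>v\<in>lp_vars P \<inter> lp_free P. f (Dual_Le v)) + f Dual_Bound"
proof -
  let ?C = "lp_cons P - lp_eqs P" and ?W = "lp_vars P \<inter> lp_free P"
  have "Dual_Bound \<notin> Dual_Nonneg ` ?C \<union> Dual_Ge ` lp_vars P \<union> Dual_Le ` ?W"
    and "Dual_Nonneg ` ?C \<inter> Dual_Ge ` lp_vars P = {}"
    and "(Dual_Nonneg ` ?C \<union> Dual_Ge ` lp_vars P) \<inter> Dual_Le ` ?W = {}"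
    by auto
  then show ?thesis
    using assms unfolding dual_rows_def
    by (simp add: sum.union_disjoint sum.reindex inj_on_def) (simp add: algebra_simps)
qed

lemma dual_rows_solution:
  assumes "finite (lp_cons P)"
    and u: "\<forall>i\<in>dual_rows P. (\<Sum>c\<in>lp_cons P. dual_coeff P i c * u c) \<le> dual_bound P M i"
  shows "lp_dual_feasible P u" "lp_dual_objective P u \<le> M"
proof -
  show "lp_dual_feasible P u"
    unfolding lp_dual_feasible_def
  proof (intro conjI ballI)
    fix c assume c: "c \<in> lp_cons P - lp_eqs P"
    then have "Dual_Nonneg c \<in> dual_rows P" by (simp add: dual_rows_def)
    from bspec[OF u this] have "(\<Sum>c'\<in>lp_cons P. if c' = c then - u c' else 0) \<le> 0"
      by (simp add: if_distrib[of "\<lambda>x. x * _"] cong: if_cong)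
    with c assms(1) show "0 \<le> u c" by simp
  next
    fix v assume v: "v \<in> lp_vars P"
    then have "Dual_Ge v \<in> dual_rows P" by (simp add: dual_rows_def)
    from bspec[OF u this] have "lp_obj P v \<le> lp_col P v u" by (simp add: sum_negf)
    moreover have "lp_col P v u \<le> lp_obj P v" if "v \<in> lp_free P"
    proof -
      have "Dual_Le v \<in> dual_rows P" using v that by (simp add: dual_rows_def)
      from bspec[OF u this] show ?thesis by simp
    qed
    ultimately show "if v \<in> lp_free P then lp_col P v u = lp_obj P v else lp_obj P v \<le> lp_col P v u"
      by auto
  qed
  show "lp_dual_objective P u \<le> M"
    using u by (simp add: dual_rows_def lp_dual_objective_def)
qed

text \<open>The multipliers of a combination of the rows \<open>dual_rows\<close> form a point \<open>z\<close> of the primal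
  scaled by \<open>s = l Dual_Bound\<close>, and the combined right-hand side is \<open>s * M - lp_objective P z\<close>.\<close>

lemma dual_rows_certificate:
  fixes P :: "('v, 'c) lp"
  assumes finV: "finite (lp_vars P)" and finC: "finite (lp_cons P)"
    and x0: "lp_feasible P x0" and bounded: "\<And>x. lp_feasible P x \<Longrightarrow> lp_objective P x \<le> M"
    and l: "\<forall>i\<in>dual_rows P. 0 \<le> l i" "\<forall>c\<in>lp_cons P. (\<Sum>i\<in>dual_rows P. l i * dual_coeff P i c) = 0"
  shows "0 \<le> (\<Sum>i\<in>dual_rows P. l i * dual_bound P M i)"
proof -
  let ?V = "lp_vars P" and ?C = "lp_cons P" and ?E = "lp_eqs P" and ?F = "lp_free P"
  define s where "s = l Dual_Bound"
  define z where "z v = l (Dual_Ge v) - (if v \<in> ?F then l (Dual_Le v) else 0)" for v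
  have sum_z: "(\<Sum>v\<in>?V. f v * z v) = (\<Sum>v\<in>?V. l (Dual_Ge v) * f v) - (\<Sum>v\<in>?V \<inter> ?F. l (Dual_Le v) * f v)"
    for f
  proof -
    have "(\<Sum>v\<in>?V. f v * z v) = (\<Sum>v\<in>?V. l (Dual_Ge v) * f v - (if v \<in> ?F then l (Dual_Le v) * f v else 0))"
      by (intro sum.cong) (auto simp: z_def algebra_simps)
    then show ?thesis using finV by (simp add: sum_subtractf sum.inter_restrict)
  qed
  have row: "lp_row P c z = s * lp_rhs P c - (if c \<in> ?E then 0 else l (Dual_Nonneg c))" if c: "c \<in> ?C" for c
  proof -
    have "(\<Sum>c'\<in>?C - ?E. l (Dual_Nonneg c') * dual_coeff P (Dual_Nonneg c') c)
        = - (if c \<in> ?E then 0 else l (Dual_Nonneg c))"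
      using c finC by (simp add: if_distrib[of "\<lambda>x. _ * x"] cong: if_cong)
    moreover have "(\<Sum>i\<in>dual_rows P. l i * dual_coeff P i c) = 0" using l(2) c by blast
    ultimately show ?thesis
      by (simp add: sum_dual_rows[OF finV finC] s_def sum_z[of "lp_mat P c"] sum_negf)
  qed
  have "lp_scaled_feasible P s z"
    using row l(1) by (simp add: lp_scaled_feasible_def z_def dual_rows_def)
  moreover have "0 \<le> s" using l(1) by (simp add: s_def dual_rows_def)
  ultimately have "lp_objective P z \<le> s * M"
    using lp_scaled_feasible_objective_le[OF x0 bounded] by blast
  then show ?thesis
    by (simp add: sum_dual_rows[OF finV finC] s_def lp_objective_def sum_z[of "lp_obj P"] sum_negf)
qed

theorem lp_strong_duality:
  fixes P :: "('v, 'c) lp"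
  assumes finV: "finite (lp_vars P)" and finC: "finite (lp_cons P)"
    and x0: "lp_feasible P x0" and bounded: "\<And>x. lp_feasible P x \<Longrightarrow> lp_objective P x \<le> M"
  shows "\<exists>u. lp_dual_feasible P u \<and> lp_dual_objective P u \<le> M"
proof (rule ccontr)
  assume "\<nexists>u. lp_dual_feasible P u \<and> lp_dual_objective P u \<le> M"
  then have "\<not> (\<exists>u. \<forall>i\<in>dual_rows P. (\<Sum>c\<in>lp_cons P. dual_coeff P i c * u c) \<le> dual_bound P M i)"
    using dual_rows_solution[OF finC] by blast
  from farkas_certificate[OF finC finite_dual_rows[OF finV finC] this] obtain l where
    "\<forall>i\<in>dual_rows P. 0 \<le> l i" "\<forall>c\<in>lp_cons P. (\<Sum>i\<in>dual_rows P. l i * dual_coeff P i c) = 0"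
    "(\<Sum>i\<in>dual_rows P. l i * dual_bound P M i) < 0"
    by blast
  with dual_rows_certificate[OF finV finC x0 bounded] show False by fastforce
qed

definition lp_relax :: "('v, 'c) lp \<Rightarrow> 'c set \<Rightarrow> ('v, 'c) lp" where
  "lp_relax P R = P\<lparr>lp_cons := lp_cons P - R\<rparr>"

definition lp_lagrangian :: "('v, 'c) lp \<Rightarrow> 'c set \<Rightarrow> ('c \<Rightarrow> real) \<Rightarrow> ('v, 'c) lp" where
  "lp_lagrangian P R \<mu> = (lp_relax P R)\<lparr>lp_obj := (\<lambda>v. lp_obj P v - (\<Sum>c\<in>R. \<mu> c * lp_mat P c v))\<rparr>"

lemma lp_relax_simps [simp]:
  "lp_vars (lp_relax P R) = lp_vars P" "lp_cons (lp_relax P R) = lp_cons P - R"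
  "lp_eqs (lp_relax P R) = lp_eqs P" "lp_free (lp_relax P R) = lp_free P"
  "lp_obj (lp_relax P R) = lp_obj P" "lp_mat (lp_relax P R) = lp_mat P"
  "lp_rhs (lp_relax P R) = lp_rhs P"
  by (simp_all add: lp_relax_def)

lemma lp_lagrangian_simps [simp]:
  "lp_vars (lp_lagrangian P R \<mu>) = lp_vars P" "lp_cons (lp_lagrangian P R \<mu>) = lp_cons P - R"
  "lp_eqs (lp_lagrangian P R \<mu>) = lp_eqs P" "lp_free (lp_lagrangian P R \<mu>) = lp_free P"
  "lp_obj (lp_lagrangian P R \<mu>) = (\<lambda>v. lp_obj P v - (\<Sum>c\<in>R. \<mu> c * lp_mat P c v))"
  "lp_mat (lp_lagrangian P R \<mu>) = lp_mat P" "lp_rhs (lp_lagrangian P R \<mu>) = lp_rhs P"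
  by (simp_all add: lp_lagrangian_def)

lemma lp_feasible_relax_iff:
  "lp_feasible (lp_relax P R) x \<longleftrightarrow> (\<forall>v\<in>lp_vars P - lp_free P. 0 \<le> x v) \<and>
    (\<forall>c\<in>lp_cons P - R. if c \<in> lp_eqs P then lp_row P c x = lp_rhs P c else lp_row P c x \<le> lp_rhs P c)"
  by (simp add: lp_feasible_def)

lemma lp_feasible_lagrangian [simp]: "lp_feasible (lp_lagrangian P R \<mu>) = lp_feasible (lp_relax P R)"
  by (simp add: lp_feasible_def fun_eq_iff)

lemma lp_feasible_iff_relax:
  assumes "R \<inter> lp_eqs P = {}"
  shows "lp_feasible P x \<longleftrightarrow>
    lp_feasible (lp_relax P R) x \<and> (\<forall>c\<in>lp_cons P \<inter> R. lp_row P c x \<le> lp_rhs P c)"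
  using assms by (auto simp: lp_feasible_def lp_feasible_relax_iff)

lemma lp_objective_lagrangian:
  assumes "finite (lp_vars P)" "finite R"
  shows "lp_objective (lp_lagrangian P R \<mu>) x = lp_objective P x - (\<Sum>c\<in>R. \<mu> c * lp_row P c x)"
proof -
  have "lp_objective (lp_lagrangian P R \<mu>) x
      = lp_objective P x - (\<Sum>v\<in>lp_vars P. \<Sum>c\<in>R. \<mu> c * lp_mat P c v * x v)"
    by (simp add: lp_objective_def left_diff_distrib sum_subtractf sum_distrib_right)
  also have "(\<Sum>v\<in>lp_vars P. \<Sum>c\<in>R. \<mu> c * lp_mat P c v * x v) = (\<Sum>c\<in>R. \<mu> c * lp_row P c x)"
    by (subst sum.swap) (simp add: sum_distrib_left mult.assoc)
  finally show ?thesis .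
qed

lemma lp_objective_le_partial_dual:
  fixes P :: "('v, 'c) lp"
  assumes fin: "finite (lp_vars P)" "finite (lp_cons P)" and "R \<subseteq> lp_cons P"
    and u: "lp_dual_feasible P u" and x: "lp_feasible (lp_relax P R) x"
  shows "lp_objective P x \<le> (\<Sum>c\<in>R. u c * lp_row P c x) + (\<Sum>c\<in>lp_cons P - R. lp_rhs P c * u c)"
proof -
  have "lp_objective P x \<le> (\<Sum>v\<in>lp_vars P. lp_col P v u * x v)"
    unfolding lp_objective_def
  proof (rule sum_mono)
    fix v assume v: "v \<in> lp_vars P"
    show "lp_obj P v * x v \<le> lp_col P v u * x v"
    proof (cases "v \<in> lp_free P")
      case True
      then show ?thesis using u v by (simp add: lp_dual_feasible_def)
    next
      case False
      then show ?thesis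
        using u x v by (intro mult_right_mono) (simp_all add: lp_dual_feasible_def lp_feasible_relax_iff)
    qed
  qed
  also have "\<dots> = (\<Sum>c\<in>lp_cons P. u c * lp_row P c x)"
    by (simp add: sum_distrib_left sum_distrib_right sum.swap[of _ "lp_vars P"] ac_simps)
  also have "\<dots> = (\<Sum>c\<in>R. u c * lp_row P c x) + (\<Sum>c\<in>lp_cons P - R. u c * lp_row P c x)"
    using fin \<open>R \<subseteq> lp_cons P\<close> by (simp add: sum.subset_diff add.commute)
  also have "(\<Sum>c\<in>lp_cons P - R. u c * lp_row P c x) \<le> (\<Sum>c\<in>lp_cons P - R. lp_rhs P c * u c)"
  proof (rule sum_mono)
    fix c assume c: "c \<in> lp_cons P - R"
    show "u c * lp_row P c x \<le> lp_rhs P c * u c"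
    proof (cases "c \<in> lp_eqs P")
      case True
      then have "lp_row P c x = lp_rhs P c" using x c by (auto simp: lp_feasible_relax_iff)
      then show ?thesis by simp
    next
      case False
      then have "0 \<le> u c" "lp_row P c x \<le> lp_rhs P c"
        using u x c by (auto simp: lp_dual_feasible_def lp_feasible_relax_iff)
      then show ?thesis by (simp add: mult_left_mono mult.commute)
    qed
  qed
  finally show ?thesis by simp
qed

lemma lp_dual_feasible_of_lagrangian:
  fixes P :: "('v, 'c) lp"
  assumes "finite (lp_cons P)" "R \<subseteq> lp_cons P" "R \<inter> lp_eqs P = {}" "\<forall>c\<in>R. 0 \<le> \<mu> c"
    and v: "lp_dual_feasible (lp_lagrangian P R \<mu>) v"
  defines "u \<equiv> \<lambda>c. if c \<in> R then \<mu> c else v c"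
  shows "lp_dual_feasible P u"
    and "lp_dual_objective P u = (\<Sum>c\<in>R. lp_rhs P c * \<mu> c) + lp_dual_objective (lp_lagrangian P R \<mu>) v"
proof -
  have split: "(\<Sum>c\<in>lp_cons P. f c * u c) = (\<Sum>c\<in>R. f c * \<mu> c) + (\<Sum>c\<in>lp_cons P - R. f c * v c)" for f
  proof -
    have "(\<Sum>c\<in>lp_cons P. f c * u c) = (\<Sum>c\<in>R. f c * u c) + (\<Sum>c\<in>lp_cons P - R. f c * u c)"
      using assms(1,2) by (simp add: sum.subset_diff add.commute)
    also have "\<dots> = (\<Sum>c\<in>R. f c * \<mu> c) + (\<Sum>c\<in>lp_cons P - R. f c * v c)"
      by (auto simp: u_def intro!: arg_cong2[where f = "(+)"] sum.cong)
    finally show ?thesis .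
  qed
  show "lp_dual_feasible P u"
    unfolding lp_dual_feasible_def
  proof (intro conjI ballI)
    fix c assume "c \<in> lp_cons P - lp_eqs P"
    then show "0 \<le> u c" using v assms(3,4) by (auto simp: u_def lp_dual_feasible_def)
  next
    fix x assume x: "x \<in> lp_vars P"
    have col: "lp_col P x u = (\<Sum>c\<in>R. \<mu> c * lp_mat P c x) + (\<Sum>c\<in>lp_cons P - R. lp_mat P c x * v c)"
      using split[of "\<lambda>c. lp_mat P c x"] by (simp add: mult.commute)
    have "if x \<in> lp_free P then lp_col (lp_lagrangian P R \<mu>) x v = lp_obj (lp_lagrangian P R \<mu>) x
      else lp_obj (lp_lagrangian P R \<mu>) x \<le> lp_col (lp_lagrangian P R \<mu>) x v"
      using v x unfolding lp_dual_feasible_def lp_lagrangian_simps(1,4) by blast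
    then show "if x \<in> lp_free P then lp_col P x u = lp_obj P x else lp_obj P x \<le> lp_col P x u"
      unfolding col by (auto split: if_splits)
  qed
  show "lp_dual_objective P u = (\<Sum>c\<in>R. lp_rhs P c * \<mu> c) + lp_dual_objective (lp_lagrangian P R \<mu>) v"
    by (simp add: lp_dual_objective_def split)
qed

lemma lp_value_eqI:
  assumes "lp_feasible P x0" and "\<And>x. lp_feasible P x \<Longrightarrow> lp_objective P x \<le> B"
    and "\<And>x. lp_feasible P x \<Longrightarrow> \<exists>y. lp_feasible Q y \<and> lp_objective P x \<le> lp_objective Q y"
    and "\<And>y. lp_feasible Q y \<Longrightarrow> \<exists>x. lp_feasible P x \<and> lp_objective Q y \<le> lp_objective P x"
  shows "lp_value P = lp_value Q"
proof -
  define SP where "SP = {lp_objective P x | x. lp_feasible P x}"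
  define SQ where "SQ = {lp_objective Q y | y. lp_feasible Q y}"
  have "SP \<noteq> {}" "bdd_above SP" using assms(1,2) by (auto simp: SP_def bdd_above_def)
  moreover have "\<forall>t\<in>SP. \<exists>t'\<in>SQ. t \<le> t'" "\<forall>t\<in>SQ. \<exists>t'\<in>SP. t \<le> t'"
    using assms(3,4) by (fastforce simp: SP_def SQ_def)+
  moreover from calculation have "SQ \<noteq> {}" "bdd_above SQ"
    by (auto simp: bdd_above_def) (meson order_trans)
  ultimately have "Sup SP = Sup SQ"
    by (intro antisym cSup_mono) auto
  then show ?thesis by (simp add: lp_value_def SP_def SQ_def)
qed

lemma lp_dual_optimal_image_subset:
  assumes PQ: "\<And>u. lp_dual_feasible P u \<Longrightarrow>
      \<exists>u'. lp_dual_feasible Q u' \<and> g u' = f u \<and> lp_dual_objective Q u' \<le> lp_dual_objective P u"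
    and QP: "\<And>u'. lp_dual_feasible Q u' \<Longrightarrow>
      \<exists>u. lp_dual_feasible P u \<and> lp_dual_objective P u \<le> lp_dual_objective Q u'"
  shows "{f u | u. lp_dual_optimal P u} \<subseteq> {g u | u. lp_dual_optimal Q u}"
proof clarify
  fix u assume opt: "lp_dual_optimal P u"
  then obtain u' where u': "lp_dual_feasible Q u'" "g u' = f u"
    "lp_dual_objective Q u' \<le> lp_dual_objective P u"
    using PQ by (auto simp: lp_dual_optimal_def)
  have "lp_dual_objective Q u' \<le> lp_dual_objective Q w" if w: "lp_dual_feasible Q w" for w
  proof -
    obtain w' where "lp_dual_feasible P w'" "lp_dual_objective P w' \<le> lp_dual_objective Q w"
      using QP[OF w] by blast
    then show ?thesis using u'(3) opt by (force simp: lp_dual_optimal_def)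
  qed
  then have "lp_dual_optimal Q u'" using u'(1) by (simp add: lp_dual_optimal_def)
  then show "\<exists>w. f u = g w \<and> lp_dual_optimal Q w" using u'(2) by metis
qed

lemma lp_dual_optimal_image_eq:
  assumes "\<And>u. lp_dual_feasible P u \<Longrightarrow>
      \<exists>u'. lp_dual_feasible Q u' \<and> g u' = f u \<and> lp_dual_objective Q u' \<le> lp_dual_objective P u"
    and "\<And>u'. lp_dual_feasible Q u' \<Longrightarrow>
      \<exists>u. lp_dual_feasible P u \<and> f u = g u' \<and> lp_dual_objective P u \<le> lp_dual_objective Q u'"
  shows "{f u | u. lp_dual_optimal P u} = {g u | u. lp_dual_optimal Q u}"
proof
  show "{f u | u. lp_dual_optimal P u} \<subseteq> {g u | u. lp_dual_optimal Q u}"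
    by (rule lp_dual_optimal_image_subset) (use assms in blast)+
  show "{g u | u. lp_dual_optimal Q u} \<subseteq> {f u | u. lp_dual_optimal P u}"
    by (rule lp_dual_optimal_image_subset) (use assms in blast)+
qed

section \<open>Layer-cake decomposition\<close>

definition layer_decomposition :: "'a set \<Rightarrow> real \<Rightarrow> ('a \<Rightarrow> real) \<Rightarrow> ('a set \<Rightarrow> real) \<Rightarrow> bool" where
  "layer_decomposition I x0 x w \<longleftrightarrow> (\<forall>S. 0 \<le> w S) \<and> (\<Sum>S\<in>Pow I. w S) = x0
     \<and> (\<forall>i\<in>I. (\<Sum>S\<in>Pow I. w S * of_bool (i \<in> S)) = x i)
     \<and> (\<forall>i\<in>I. \<forall>j\<in>I. (\<Sum>S\<in>Pow I. w S * of_bool (i \<in> S \<and> j \<in> S)) = min (x i) (x j))"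

lemma layer_decomposition_zero:
  assumes "finite I" "0 \<le> x0" "\<forall>i\<in>I. x i = 0"
  shows "layer_decomposition I x0 x (\<lambda>S. if S = {} then x0 else 0)"
  using assms by (simp add: layer_decomposition_def if_distrib[of "\<lambda>u. u * _"] cong: if_cong)

lemma layer_decomposition_add_layer:
  assumes "finite I" "T \<subseteq> I" "0 \<le> t" "\<forall>i\<in>I - T. x i = 0" "\<forall>i\<in>T. t \<le> x i"
    and w: "layer_decomposition I x0 (\<lambda>i. if i \<in> T then x i - t else x i) w"
  shows "layer_decomposition I (x0 + t) x (\<lambda>S. w S + (if S = T then t else 0))"
proof -
  have layer: "(\<Sum>S\<in>Pow I. (w S + (if S = T then t else 0)) * g S) = (\<Sum>S\<in>Pow I. w S * g S) + t * g T"
    for g :: "'a set \<Rightarrow> real"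
    using assms(1,2) by (simp add: distrib_right sum.distrib if_distrib[of "\<lambda>u. u * _"] cong: if_cong)
  have min: "min (if i \<in> T then x i - t else x i) (if j \<in> T then x j - t else x j)
      + t * of_bool (i \<in> T \<and> j \<in> T) = min (x i) (x j)" if "i \<in> I" "j \<in> I" for i j
    using assms(3-5) that by (cases "i \<in> T"; cases "j \<in> T") (auto simp: min_def)
  show ?thesis
    unfolding layer_decomposition_def
  proof (intro conjI ballI allI)
    show "0 \<le> w S + (if S = T then t else 0)" for S
      using w assms(3) by (simp add: layer_decomposition_def)
    show "(\<Sum>S\<in>Pow I. w S + (if S = T then t else 0)) = x0 + t"
      using w layer[of "\<lambda>_. 1"] by (simp add: layer_decomposition_def)
    show "(\<Sum>S\<in>Pow I. (w S + (if S = T then t else 0)) * of_bool (i \<in> S)) = x i" if "i \<in> I" for i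
      using w layer[of "\<lambda>S. of_bool (i \<in> S)"] that by (simp add: layer_decomposition_def)
    show "(\<Sum>S\<in>Pow I. (w S + (if S = T then t else 0)) * of_bool (i \<in> S \<and> j \<in> S)) = min (x i) (x j)"
      if "i \<in> I" "j \<in> I" for i j
      using w layer[of "\<lambda>S. of_bool (i \<in> S \<and> j \<in> S)"] min[OF that] that
      by (simp add: layer_decomposition_def)
  qed
qed

text \<open>The smallest positive value of \<open>x\<close> becomes a layer on the support of \<open>x\<close>; what remains
  has a smaller support.\<close>

lemma layer_decomposition_exists:
  assumes "finite I" "0 \<le> x0" "\<forall>i\<in>I. 0 \<le> x i \<and> x i \<le> x0"
  shows "\<exists>w. layer_decomposition I x0 x w"
  using assms(2,3)
proof (induction "card {i\<in>I. 0 < x i}" arbitrary: x x0 rule: less_induct)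
  case less
  define T where "T = {i\<in>I. 0 < x i}"
  have "finite T" "T \<subseteq> I" using assms(1) by (auto simp: T_def)
  have outside: "\<forall>i\<in>I - T. x i = 0" using less.prems by (force simp: T_def)
  show ?case
  proof (cases "T = {}")
    case True
    then show ?thesis using layer_decomposition_zero assms(1) less.prems(1) outside by blast
  next
    case False
    define t where "t = Min (x ` T)"
    have "t \<in> x ` T" unfolding t_def using \<open>finite T\<close> False by (intro Min_in) auto
    then obtain i0 where "i0 \<in> T" "x i0 = t" by auto
    have t_le: "\<forall>i\<in>T. t \<le> x i" using \<open>finite T\<close> by (simp add: t_def)
    define x' where "x' = (\<lambda>i. if i \<in> T then x i - t else x i)"
    have "{i\<in>I. 0 < x' i} \<subseteq> T - {i0}"
      using \<open>x i0 = t\<close> by (auto simp: x'_def T_def)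
    then have "card {i\<in>I. 0 < x' i} < card T"
      using \<open>finite T\<close> \<open>i0 \<in> T\<close> by (meson card_Diff1_less card_mono finite_Diff le_less_trans)
    moreover have "0 \<le> x0 - t" using less.prems(2) \<open>i0 \<in> T\<close> \<open>x i0 = t\<close> by (force simp: T_def)
    moreover have "\<forall>i\<in>I. 0 \<le> x' i \<and> x' i \<le> x0 - t"
      using less.prems(2) t_le outside \<open>0 \<le> x0 - t\<close> by (force simp: x'_def)
    ultimately obtain w where "layer_decomposition I (x0 - t) x' w"
      using less.hyps T_def by blast
    moreover have "0 \<le> t" using \<open>i0 \<in> T\<close> \<open>x i0 = t\<close> by (simp add: T_def)
    ultimately have "layer_decomposition I (x0 - t + t) x (\<lambda>S. w S + (if S = T then t else 0))"
      unfolding x'_def by (intro layer_decomposition_add_layer[OF assms(1) \<open>T \<subseteq> I\<close> _ outside t_le])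
    then show ?thesis by auto
  qed
qed

section \<open>Assortments and the compact LP\<close>

definition mnl_denom :: "(nat \<Rightarrow> real) \<Rightarrow> nat set \<Rightarrow> real" where
  "mnl_denom vhat S = 1 + (\<Sum>j\<in>S. vhat j)"

lemma mnl_denom_pos: "(\<And>j. j \<in> S \<Longrightarrow> 0 \<le> vhat j) \<Longrightarrow> 0 < mnl_denom vhat S"
  unfolding mnl_denom_def by (simp add: add_pos_nonneg sum_nonneg)

lemma mnl_denom_mult_sum:
  assumes "finite S" "mnl_denom vhat S \<noteq> 0"
  shows "mnl_denom vhat S * (\<Sum>i\<in>S. \<alpha> i * mnl_prob vhat S i + \<beta> i)
    = (\<Sum>i\<in>S. \<alpha> i * vhat i + \<beta> i) + (\<Sum>i\<in>S. \<Sum>j\<in>S. \<beta> i * vhat j)"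
proof -
  have "mnl_denom vhat S * (\<alpha> i * mnl_prob vhat S i + \<beta> i) = \<alpha> i * vhat i + \<beta> i * mnl_denom vhat S"
    for i using assms(2) by (simp add: mnl_prob_def mnl_denom_def[symmetric] field_simps)
  moreover have "\<beta> i * mnl_denom vhat S = \<beta> i + (\<Sum>j\<in>S. \<beta> i * vhat j)" for i
    by (simp add: mnl_denom_def distrib_left sum_distrib_left)
  ultimately have summand: "mnl_denom vhat S * (\<alpha> i * mnl_prob vhat S i + \<beta> i)
      = \<alpha> i * vhat i + \<beta> i + (\<Sum>j\<in>S. \<beta> i * vhat j)" for i
    by simp
  have "mnl_denom vhat S * (\<Sum>i\<in>S. \<alpha> i * mnl_prob vhat S i + \<beta> i)
      = (\<Sum>i\<in>S. \<alpha> i * vhat i + \<beta> i + (\<Sum>j\<in>S. \<beta> i * vhat j))"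
    unfolding sum_distrib_left by (intro sum.cong refl summand)
  then show ?thesis by (simp add: sum.distrib)
qed

lemma sum_delta_pair:
  assumes "finite A" "finite B"
  shows "(\<Sum>i\<in>A. \<Sum>j\<in>B. if i = i0 \<and> j = j0 then x else 0) = (if i0 \<in> A \<and> j0 \<in> B then x else 0)"
proof -
  have "(\<Sum>i\<in>A. \<Sum>j\<in>B. if i = i0 \<and> j = j0 then x else 0)
      = (\<Sum>i\<in>A. if i = i0 then (\<Sum>j\<in>B. if j = j0 then x else 0) else 0)"
    by (rule sum.cong) auto
  then show ?thesis using assms by simp
qed

lemma sum_Pow_indicator:
  fixes f :: "'a set \<Rightarrow> real"
  assumes "finite I" "T \<subseteq> I"
  shows "(\<Sum>S\<in>Pow I. f S * of_bool (S = T)) = f T"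
proof -
  have "(\<Sum>S\<in>Pow I. f S * of_bool (S = T)) = (\<Sum>S\<in>Pow I. if S = T then f T else 0)"
    by (rule sum.cong) auto
  then show ?thesis using assms by simp
qed

definition assortment_point :: "nat set \<Rightarrow> cvar \<Rightarrow> real" where
  "assortment_point S v =
     (case v of X0 \<Rightarrow> 1 | X i \<Rightarrow> of_bool (i \<in> S) | Y i j \<Rightarrow> of_bool (i \<in> S \<and> j \<in> S))"

definition assortment_mixture :: "nat \<Rightarrow> (nat set \<Rightarrow> real) \<Rightarrow> cvar \<Rightarrow> real" where
  "assortment_mixture N w v = (\<Sum>S\<in>Pow {1..N}. w S * assortment_point S v)"

text \<open>The change of variables \<open>x\<^sub>0 = \<Sum>\<^sub>S y(S) / (1 + V(S))\<close>,
  \<open>x\<^sub>i = \<Sum>\<^sub>S\<^sub>\<ni>\<^sub>i y(S) / (1 + V(S))\<close> and \<open>y\<^sub>i\<^sub>j = \<Sum>\<^sub>S\<^sub>\<ni>\<^sub>i\<^sub>,\<^sub>j y(S) / (1 + V(S))\<close>.\<close>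

definition compact_of_distribution :: "nat \<Rightarrow> (nat \<Rightarrow> real) \<Rightarrow> (nat set \<Rightarrow> real) \<Rightarrow> cvar \<Rightarrow> real" where
  "compact_of_distribution N vhat y = assortment_mixture N (\<lambda>S. y S / mnl_denom vhat S)"

definition assortment_distributions :: "nat \<Rightarrow> (nat set \<Rightarrow> real) set" where
  "assortment_distributions N = {y. (\<forall>S\<in>Pow {1..N}. 0 \<le> y S) \<and> (\<Sum>S\<in>Pow {1..N}. y S) = 1}"

definition compact_polytope :: "nat \<Rightarrow> (nat \<Rightarrow> real) \<Rightarrow> (cvar \<Rightarrow> real) set" where
  "compact_polytope N vhat = {z. z X0 + (\<Sum>i=1..N. vhat i * z (X i)) = 1
     \<and> (\<forall>i\<in>{1..N}. 0 \<le> z (X i) \<and> z (X i) \<le> z X0)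
     \<and> (\<forall>i\<in>{1..N}. \<forall>j\<in>{1..N}. 0 \<le> z (Y i j) \<and> z (Y i j) \<le> z (X i) \<and> z (Y i j) \<le> z (X j))}"

definition ucb_resources :: "nat \<Rightarrow> nat option set" where
  "ucb_resources K = Some ` {1..K}"

definition compact_resources :: "nat \<Rightarrow> ccon set" where
  "compact_resources K = Res ` {1..K}"

definition compact_prices :: "(nat option \<Rightarrow> real) \<Rightarrow> ccon \<Rightarrow> real" where
  "compact_prices u' con = (case con of Res k \<Rightarrow> u' (Some k) | _ \<Rightarrow> 0)"

lemma sum_Res: "(\<Sum>con\<in>Res ` A. f con) = (\<Sum>k\<in>A. f (Res k))"
  by (simp add: sum.reindex inj_on_def)

context
  fixes N K :: nat and vhat r :: "nat \<Rightarrow> real" and a :: "nat \<Rightarrow> nat \<Rightarrow> real"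
    and c :: "nat \<Rightarrow> real" and \<omega> :: real and eps :: "nat \<Rightarrow> real"
begin

abbreviation "UCB \<equiv> ucb_lp N K vhat r a c \<omega> eps"
abbreviation "CLP \<equiv> compact_lp N K vhat r a c \<omega> eps"

lemma ucb_lp_sets:
  "lp_vars UCB = Pow {1..N}" "lp_cons UCB = insert None (Some ` {1..K})" "lp_eqs UCB = {None}"
  "lp_free UCB = {}"
  by (simp_all add: ucb_lp_def)

lemma ucb_lp_coeffs:
  "lp_obj UCB S = (\<Sum>i\<in>S. r i * (mnl_prob vhat S i + eps i))"
  "lp_mat UCB None S = 1" "lp_mat UCB (Some k) S = (\<Sum>i\<in>S. a i k * (mnl_prob vhat S i - eps i))"
  "lp_rhs UCB None = 1" "lp_rhs UCB (Some k) = (1 - \<omega>) * c k"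
  by (simp_all add: ucb_lp_def)

lemma compact_lp_sets:
  "lp_vars CLP = {X0} \<union> X ` {1..N} \<union> {Y i j | i j. i \<in> {1..N} \<and> j \<in> {1..N}}"
  "lp_cons CLP = Res ` {1..K} \<union> {Norm} \<union> Cap ` {1..N}
     \<union> {YI i j | i j. i \<in> {1..N} \<and> j \<in> {1..N}} \<union> {YJ i j | i j. i \<in> {1..N} \<and> j \<in> {1..N}}"
  "lp_eqs CLP = {Norm}" "lp_free CLP = {X0}"
  by (simp_all add: compact_lp_def)

lemma compact_lp_coeffs:
  "lp_obj CLP = compact_obj vhat r eps" "lp_mat CLP = compact_mat vhat a eps"
  "lp_rhs CLP = compact_rhs K c \<omega>"
  by (simp_all add: compact_lp_def)

lemma sum_compact_vars:
  "(\<Sum>v\<in>lp_vars CLP. f v) = f X0 + (\<Sum>i=1..N. f (X i)) + (\<Sum>i=1..N. \<Sum>j=1..N. f (Y i j))"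
proof -
  let ?Y = "(\<lambda>(i, j). Y i j) ` ({1..N} \<times> {1..N})"
  have vars: "lp_vars CLP = insert X0 (X ` {1..N} \<union> ?Y)"
    unfolding compact_lp_sets by auto
  have "X0 \<notin> X ` {1..N} \<union> ?Y" "X ` {1..N} \<inter> ?Y = {}" by auto
  then have "(\<Sum>v\<in>lp_vars CLP. f v) = f X0 + ((\<Sum>v\<in>X ` {1..N}. f v) + (\<Sum>v\<in>?Y. f v))"
    unfolding vars by (simp add: sum.union_disjoint)
  also have "(\<Sum>v\<in>X ` {1..N}. f v) = (\<Sum>i=1..N. f (X i))"
    by (simp add: sum.reindex inj_on_def)
  also have "(\<Sum>v\<in>?Y. f v) = (\<Sum>i=1..N. \<Sum>j=1..N. f (Y i j))"
    by (simp add: sum.reindex inj_on_def sum.cartesian_product split_def)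
  finally show ?thesis by (simp add: add.assoc)
qed

lemma sum_ucb_cons: "(\<Sum>con\<in>lp_cons UCB. f con) = f None + (\<Sum>k=1..K. f (Some k))"
  by (simp add: ucb_lp_sets sum.reindex)

lemma finite_compact_lp: "finite (lp_vars CLP)" "finite (lp_cons CLP)"
proof -
  have "{Y i j | i j. i \<in> {1..N} \<and> j \<in> {1..N}} = (\<lambda>(i, j). Y i j) ` ({1..N} \<times> {1..N})"
    "{YI i j | i j. i \<in> {1..N} \<and> j \<in> {1..N}} = (\<lambda>(i, j). YI i j) ` ({1..N} \<times> {1..N})"
    "{YJ i j | i j. i \<in> {1..N} \<and> j \<in> {1..N}} = (\<lambda>(i, j). YJ i j) ` ({1..N} \<times> {1..N})"
    by auto
  then show "finite (lp_vars CLP)" "finite (lp_cons CLP)"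
    unfolding compact_lp_sets by simp_all
qed

lemma finite_ucb_lp: "finite (lp_vars UCB)" "finite (lp_cons UCB)"
  by (simp_all add: ucb_lp_sets)

lemma sum_compact_structural_rhs:
  "(\<Sum>con\<in>lp_cons CLP - Res ` {1..K}. compact_rhs K c \<omega> con * u con) = u Norm"
proof -
  have "(\<Sum>con\<in>lp_cons CLP - Res ` {1..K}. compact_rhs K c \<omega> con * u con)
      = (\<Sum>con\<in>lp_cons CLP - Res ` {1..K}. if con = Norm then u Norm else 0)"
    by (rule sum.cong) (auto simp: compact_lp_sets)
  also have "\<dots> = u Norm" using finite_compact_lp(2) by (auto simp: compact_lp_sets)
  finally show ?thesis .
qed

lemma lp_dual_objective_compact:
  "lp_dual_objective CLP u = (\<Sum>k=1..K. (1 - \<omega>) * c k * u (Res k)) + u Norm"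
proof -
  have "Res ` {1..K} \<subseteq> lp_cons CLP" by (auto simp: compact_lp_sets)
  then have "lp_dual_objective CLP u = (\<Sum>con\<in>Res ` {1..K}. compact_rhs K c \<omega> con * u con)
      + (\<Sum>con\<in>lp_cons CLP - Res ` {1..K}. compact_rhs K c \<omega> con * u con)"
    using finite_compact_lp(2) by (simp add: lp_dual_objective_def sum.subset_diff compact_lp_coeffs)
  then show ?thesis by (simp only: sum_Res sum_compact_structural_rhs compact_rhs.simps)
qed

lemma lp_dual_objective_ucb:
  "lp_dual_objective UCB u = u None + (\<Sum>k=1..K. (1 - \<omega>) * c k * u (Some k))"
  by (simp add: lp_dual_objective_def sum_ucb_cons ucb_lp_coeffs)

lemma compact_row_Norm: "lp_row CLP Norm z = z X0 + (\<Sum>i=1..N. vhat i * z (X i))"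
  by (simp add: sum_compact_vars compact_lp_coeffs)

lemma compact_row_Cap: "i \<in> {1..N} \<Longrightarrow> lp_row CLP (Cap i) z = z (X i) - z X0"
  by (simp add: sum_compact_vars compact_lp_coeffs if_distrib[of "\<lambda>x. x * _"] cong: if_cong)

lemma compact_row_YI:
  "i \<in> {1..N} \<Longrightarrow> j \<in> {1..N} \<Longrightarrow> lp_row CLP (YI i j) z = z (Y i j) - z (X i)"
  by (simp add: sum_compact_vars compact_lp_coeffs if_distrib[of "\<lambda>x. x * _"] sum_delta_pair
      cong: if_cong)

lemma compact_row_YJ:
  "i \<in> {1..N} \<Longrightarrow> j \<in> {1..N} \<Longrightarrow> lp_row CLP (YJ i j) z = z (Y i j) - z (X j)"
  by (simp add: sum_compact_vars compact_lp_coeffs if_distrib[of "\<lambda>x. x * _"] sum_delta_pair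
      cong: if_cong)

lemma lp_feasible_relax_compact_iff:
  "lp_feasible (lp_relax CLP (compact_resources K)) z \<longleftrightarrow> z \<in> compact_polytope N vhat"
proof -
  have cons: "lp_cons CLP - compact_resources K = insert Norm (Cap ` {1..N}
      \<union> (\<Union>i\<in>{1..N}. YI i ` {1..N}) \<union> (\<Union>i\<in>{1..N}. YJ i ` {1..N}))"
    by (auto simp: compact_lp_sets compact_resources_def)
  have vars: "lp_vars CLP - lp_free CLP = X ` {1..N} \<union> (\<Union>i\<in>{1..N}. Y i ` {1..N})"
    by (auto simp: compact_lp_sets)
  show ?thesis
    unfolding lp_feasible_relax_iff cons vars compact_polytope_def
    by (simp add: ball_Un compact_lp_sets(3) compact_lp_coeffs(3) compact_row_Norm compact_row_Cap
        compact_row_YI compact_row_YJ) (auto simp del: One_nat_def)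
qed

lemma lp_feasible_relax_ucb_iff:
  "lp_feasible (lp_relax UCB (ucb_resources K)) y \<longleftrightarrow> y \<in> assortment_distributions N"
proof -
  have "lp_cons UCB - ucb_resources K = {None}" by (auto simp: ucb_lp_sets ucb_resources_def)
  then show ?thesis
    by (simp add: lp_feasible_relax_iff ucb_lp_sets ucb_lp_coeffs assortment_distributions_def)
qed

lemma lp_feasible_compact_iff:
  "lp_feasible CLP z \<longleftrightarrow>
    z \<in> compact_polytope N vhat \<and> (\<forall>k\<in>{1..K}. lp_row CLP (Res k) z \<le> (1 - \<omega>) * c k)"
proof -
  have "lp_feasible CLP z \<longleftrightarrow> lp_feasible (lp_relax CLP (compact_resources K)) z
      \<and> (\<forall>con\<in>lp_cons CLP \<inter> compact_resources K. lp_row CLP con z \<le> lp_rhs CLP con)"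
    by (rule lp_feasible_iff_relax) (auto simp: compact_lp_sets compact_resources_def)
  also have "lp_cons CLP \<inter> compact_resources K = Res ` {1..K}"
    by (auto simp: compact_lp_sets compact_resources_def)
  finally show ?thesis unfolding lp_feasible_relax_compact_iff by (simp add: compact_lp_coeffs)
qed

lemma lp_feasible_ucb_iff:
  "lp_feasible UCB y \<longleftrightarrow>
    y \<in> assortment_distributions N \<and> (\<forall>k\<in>{1..K}. lp_row UCB (Some k) y \<le> (1 - \<omega>) * c k)"
proof -
  have "lp_feasible UCB y \<longleftrightarrow> lp_feasible (lp_relax UCB (ucb_resources K)) y
      \<and> (\<forall>con\<in>lp_cons UCB \<inter> ucb_resources K. lp_row UCB con y \<le> lp_rhs UCB con)"
    by (rule lp_feasible_iff_relax) (auto simp: ucb_lp_sets ucb_resources_def)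
  also have "lp_cons UCB \<inter> ucb_resources K = Some ` {1..K}"
    by (auto simp: ucb_lp_sets ucb_resources_def)
  finally show ?thesis unfolding lp_feasible_relax_ucb_iff by (simp add: ucb_lp_coeffs)
qed

lemma sum_compact_vars_assortment_point:
  assumes "S \<subseteq> {1..N}"
  shows "(\<Sum>v\<in>lp_vars CLP. f v * assortment_point S v)
    = f X0 + (\<Sum>i\<in>S. f (X i)) + (\<Sum>i\<in>S. \<Sum>j\<in>S. f (Y i j))"
proof -
  have restrict: "{1..N} \<inter> S = S" using assms by auto
  have X: "(\<Sum>i=1..N. f (X i) * assortment_point S (X i)) = (\<Sum>i\<in>S. f (X i))"
    by (simp add: assortment_point_def restrict del: One_nat_def)
  have "(\<Sum>j=1..N. f (Y i j) * assortment_point S (Y i j)) = of_bool (i \<in> S) * (\<Sum>j\<in>S. f (Y i j))"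
    for i by (cases "i \<in> S") (simp_all add: assortment_point_def restrict del: One_nat_def)
  then have Y: "(\<Sum>i=1..N. \<Sum>j=1..N. f (Y i j) * assortment_point S (Y i j)) = (\<Sum>i\<in>S. \<Sum>j\<in>S. f (Y i j))"
    by (simp add: restrict del: One_nat_def)
  show ?thesis
    by (simp only: sum_compact_vars X Y) (simp add: assortment_point_def)
qed

lemma sum_compact_vars_mixture:
  "(\<Sum>v\<in>lp_vars CLP. f v * assortment_mixture N w v)
    = (\<Sum>S\<in>Pow {1..N}. w S * (\<Sum>v\<in>lp_vars CLP. f v * assortment_point S v))"
  unfolding assortment_mixture_def sum_distrib_left
  by (subst sum.swap) (simp add: mult.left_commute)

lemma compact_polytope_decomposition:
  assumes "z \<in> compact_polytope N vhat"
  obtains w where "\<forall>S. 0 \<le> w S" "assortment_mixture N w X0 = z X0"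
    "\<forall>i\<in>{1..N}. assortment_mixture N w (X i) = z (X i)"
    "\<forall>i\<in>{1..N}. \<forall>j\<in>{1..N}. z (Y i j) \<le> assortment_mixture N w (Y i j)"
proof -
  have box: "\<forall>i\<in>{1..N}. 0 \<le> z (X i) \<and> z (X i) \<le> z X0"
    and Y: "\<forall>i\<in>{1..N}. \<forall>j\<in>{1..N}. z (Y i j) \<le> min (z (X i)) (z (X j))"
    using assms by (auto simp: compact_polytope_def)
  have "0 \<le> z X0"
  proof (cases "N = 0")
    case True then show ?thesis using assms by (simp add: compact_polytope_def)
  next
    case False
    then have "1 \<in> {1..N}" by simp
    then show ?thesis using box by fastforce
  qed
  from layer_decomposition_exists[OF finite_atLeastAtMost this box] obtain w
    where "layer_decomposition {1..N} (z X0) (\<lambda>i. z (X i)) w"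
    by blast
  with Y show ?thesis
    by (intro that[of w])
      (simp_all add: layer_decomposition_def assortment_mixture_def assortment_point_def)
qed

lemma sum_compact_vars_mono_Y:
  fixes f z z' :: "cvar \<Rightarrow> real"
  assumes "z X0 = z' X0" "\<forall>i\<in>{1..N}. z (X i) = z' (X i)"
    and "\<forall>i\<in>{1..N}. \<forall>j\<in>{1..N}. f (Y i j) * z (Y i j) \<le> f (Y i j) * z' (Y i j)"
  shows "(\<Sum>v\<in>lp_vars CLP. f v * z v) \<le> (\<Sum>v\<in>lp_vars CLP. f v * z' v)"
proof -
  have "(\<Sum>i=1..N. \<Sum>j=1..N. f (Y i j) * z (Y i j)) \<le> (\<Sum>i=1..N. \<Sum>j=1..N. f (Y i j) * z' (Y i j))"
    by (intro sum_mono) (use assms(3) in auto)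
  moreover have "(\<Sum>i=1..N. f (X i) * z (X i)) = (\<Sum>i=1..N. f (X i) * z' (X i))"
    by (intro sum.cong) (use assms(2) in auto)
  ultimately show ?thesis unfolding sum_compact_vars using assms(1) by simp
qed

lemma assortment_mixture_nonneg:
  "\<forall>S\<in>Pow {1..N}. 0 \<le> w S \<Longrightarrow> 0 \<le> assortment_mixture N w v"
  unfolding assortment_mixture_def
  by (intro sum_nonneg) (auto simp: assortment_point_def split: cvar.split)

lemma assortment_mixture_mono:
  assumes "\<forall>S\<in>Pow {1..N}. 0 \<le> w S" "\<And>S. assortment_point S v \<le> assortment_point S v'"
  shows "assortment_mixture N w v \<le> assortment_mixture N w v'"
  unfolding assortment_mixture_def using assms by (intro sum_mono mult_left_mono) auto

lemma empty_assortment_distribution: "(\<lambda>S. of_bool (S = {})) \<in> assortment_distributions N"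
  using sum_Pow_indicator[of "{1..N}" "{}" "\<lambda>_. 1"] by (simp add: assortment_distributions_def)

lemma ucb_feasible_empty_assortment:
  assumes "\<forall>k\<in>{1..K}. 0 \<le> (1 - \<omega>) * c k"
  shows "lp_feasible UCB (\<lambda>S. of_bool (S = {}))"
proof -
  have "lp_row UCB (Some k) (\<lambda>S. of_bool (S = {})) = 0" for k
    unfolding ucb_lp_sets(1) sum_Pow_indicator[OF finite_atLeastAtMost empty_subsetI]
    by (simp add: ucb_lp_coeffs)
  then show ?thesis using assms empty_assortment_distribution by (simp add: lp_feasible_ucb_iff)
qed

lemma ucb_objective_bounded:
  assumes "lp_feasible UCB y"
  shows "lp_objective UCB y \<le> (\<Sum>S\<in>Pow {1..N}. \<bar>lp_obj UCB S\<bar>)"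
  unfolding lp_objective_def ucb_lp_sets
proof (rule sum_mono)
  fix S assume S: "S \<in> Pow {1..N}"
  have y: "\<forall>S\<in>Pow {1..N}. 0 \<le> y S" "(\<Sum>S\<in>Pow {1..N}. y S) = 1"
    using assms by (simp_all add: lp_feasible_ucb_iff assortment_distributions_def)
  have "y S \<le> (\<Sum>S\<in>Pow {1..N}. y S)" by (rule member_le_sum) (use S y(1) in auto)
  then have "y S \<le> 1" using y(2) by simp
  have "lp_obj UCB S * y S \<le> \<bar>lp_obj UCB S\<bar> * y S" using y(1) S by (intro mult_right_mono) auto
  also have "\<dots> \<le> \<bar>lp_obj UCB S\<bar>" using \<open>y S \<le> 1\<close> by (simp add: mult_left_le)
  finally show "lp_obj UCB S * y S \<le> \<bar>lp_obj UCB S\<bar>" .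
qed

context
  assumes vhat_pos: "\<forall>i\<in>{1..N}. 0 < vhat i"
begin

lemma mnl_denom_pos_Pow: "S \<in> Pow {1..N} \<Longrightarrow> 0 < mnl_denom vhat S"
  using vhat_pos by (intro mnl_denom_pos) (auto intro: less_imp_le)

lemma compact_objective_assortment_point:
  assumes "S \<in> Pow {1..N}"
  shows "lp_objective CLP (assortment_point S) = mnl_denom vhat S * lp_obj UCB S"
proof -
  have "finite S" using assms finite_subset by auto
  from mnl_denom_mult_sum[OF this, of vhat r "\<lambda>i. r i * eps i"] mnl_denom_pos_Pow[OF assms]
  have "mnl_denom vhat S * (\<Sum>i\<in>S. r i * mnl_prob vhat S i + r i * eps i)
      = (\<Sum>i\<in>S. r i * vhat i + r i * eps i) + (\<Sum>i\<in>S. \<Sum>j\<in>S. r i * eps i * vhat j)"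
    by simp
  then show ?thesis
    using assms
    by (simp add: lp_objective_def sum_compact_vars_assortment_point compact_lp_coeffs
        ucb_lp_coeffs distrib_left)
qed

lemma compact_row_Res_assortment_point:
  assumes "S \<in> Pow {1..N}"
  shows "lp_row CLP (Res k) (assortment_point S) = mnl_denom vhat S * lp_mat UCB (Some k) S"
proof -
  have "finite S" using assms finite_subset by auto
  from mnl_denom_mult_sum[OF this, of vhat "\<lambda>i. a i k" "\<lambda>i. - (a i k * eps i)"]
    mnl_denom_pos_Pow[OF assms]
  have "mnl_denom vhat S * (\<Sum>i\<in>S. a i k * mnl_prob vhat S i + - (a i k * eps i))
      = (\<Sum>i\<in>S. a i k * vhat i + - (a i k * eps i)) + (\<Sum>i\<in>S. \<Sum>j\<in>S. - (a i k * eps i) * vhat j)"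
    by simp
  then show ?thesis
    using assms
    by (simp add: sum_compact_vars_assortment_point compact_lp_coeffs ucb_lp_coeffs
        right_diff_distrib)
qed

lemma compact_row_Norm_assortment_point:
  assumes "S \<in> Pow {1..N}"
  shows "lp_row CLP Norm (assortment_point S) = mnl_denom vhat S * lp_mat UCB None S"
  using assms
  by (simp add: sum_compact_vars_assortment_point compact_lp_coeffs ucb_lp_coeffs mnl_denom_def)

lemma sum_compact_vars_of_distribution:
  assumes "\<And>S. S \<in> Pow {1..N} \<Longrightarrow>
    (\<Sum>v\<in>lp_vars CLP. f v * assortment_point S v) = mnl_denom vhat S * g S"
  shows "(\<Sum>v\<in>lp_vars CLP. f v * compact_of_distribution N vhat y v) = (\<Sum>S\<in>Pow {1..N}. g S * y S)"
  unfolding compact_of_distribution_def sum_compact_vars_mixture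
proof (intro sum.cong refl)
  fix S assume S: "S \<in> Pow {1..N}"
  then have "mnl_denom vhat S \<noteq> 0" using mnl_denom_pos_Pow by (metis less_irrefl)
  then show "y S / mnl_denom vhat S * (\<Sum>v\<in>lp_vars CLP. f v * assortment_point S v) = g S * y S"
    unfolding assms[OF S] by simp
qed

lemma compact_of_distribution_objective:
  "lp_objective CLP (compact_of_distribution N vhat y) = lp_objective UCB y"
  using sum_compact_vars_of_distribution[of "lp_obj CLP" "lp_obj UCB"]
    compact_objective_assortment_point
  by (simp add: lp_objective_def ucb_lp_sets)

lemma compact_of_distribution_row_Res:
  "lp_row CLP (Res k) (compact_of_distribution N vhat y) = lp_row UCB (Some k) y"
  using sum_compact_vars_of_distribution[of "lp_mat CLP (Res k)" "lp_mat UCB (Some k)"]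
    compact_row_Res_assortment_point
  by (simp add: ucb_lp_sets)

lemma compact_of_distribution_row_Norm:
  "lp_row CLP Norm (compact_of_distribution N vhat y) = lp_row UCB None y"
  using sum_compact_vars_of_distribution[of "lp_mat CLP Norm" "lp_mat UCB None"]
    compact_row_Norm_assortment_point
  by (simp add: ucb_lp_sets)

lemma compact_of_distribution_mem:
  assumes "y \<in> assortment_distributions N"
  shows "compact_of_distribution N vhat y \<in> compact_polytope N vhat"
proof -
  let ?z = "compact_of_distribution N vhat y"
  have w: "\<forall>S\<in>Pow {1..N}. 0 \<le> y S / mnl_denom vhat S"
  proof
    fix S assume "S \<in> Pow {1..N}"
    then show "0 \<le> y S / mnl_denom vhat S"
      using assms mnl_denom_pos_Pow[of S] by (simp add: assortment_distributions_def)
  qed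
  have "?z X0 + (\<Sum>i=1..N. vhat i * ?z (X i)) = 1"
    using compact_of_distribution_row_Norm[of y] assms
    by (simp add: compact_row_Norm ucb_lp_sets ucb_lp_coeffs assortment_distributions_def)
  moreover have "0 \<le> ?z v" for v
    unfolding compact_of_distribution_def using w by (rule assortment_mixture_nonneg)
  moreover have "?z (X i) \<le> ?z X0" "?z (Y i j) \<le> ?z (X i)" "?z (Y i j) \<le> ?z (X j)" for i j
    unfolding compact_of_distribution_def using w
    by (intro assortment_mixture_mono; simp add: assortment_point_def)+
  ultimately show ?thesis
    unfolding compact_polytope_def by blast
qed

lemma compact_of_distribution_rescale:
  "compact_of_distribution N vhat (\<lambda>S. w S * mnl_denom vhat S) = assortment_mixture N w"
  unfolding compact_of_distribution_def assortment_mixture_def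
proof (intro ext sum.cong refl)
  fix S v assume "S \<in> Pow {1..N}"
  then have "mnl_denom vhat S \<noteq> 0" using mnl_denom_pos_Pow by (metis less_irrefl)
  then show "w S * mnl_denom vhat S / mnl_denom vhat S * assortment_point S v = w S * assortment_point S v"
    by simp
qed

context
  assumes r_nonneg: "\<forall>i\<in>{1..N}. 0 \<le> r i"
    and a_nonneg: "\<forall>i\<in>{1..N}. \<forall>k\<in>{1..K}. 0 \<le> a i k"
    and eps_nonneg: "\<forall>i\<in>{1..N}. 0 \<le> eps i"
begin

text \<open>Raising \<open>y\<^sub>i\<^sub>j\<close> to \<open>min(x\<^sub>i, x\<^sub>j)\<close> only increases the objective and decreases the
  resource consumption; after that the point is a mixture of assortments.\<close>

lemma compact_polytope_dominated:
  assumes "z \<in> compact_polytope N vhat"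
  obtains y where "y \<in> assortment_distributions N" "lp_objective CLP z \<le> lp_objective UCB y"
    "\<forall>k\<in>{1..K}. lp_row UCB (Some k) y \<le> lp_row CLP (Res k) z"
proof -
  obtain w where w: "\<forall>S. 0 \<le> w S" "assortment_mixture N w X0 = z X0"
      "\<forall>i\<in>{1..N}. assortment_mixture N w (X i) = z (X i)"
      "\<forall>i\<in>{1..N}. \<forall>j\<in>{1..N}. z (Y i j) \<le> assortment_mixture N w (Y i j)"
    using compact_polytope_decomposition[OF assms] by blast
  define y where "y S = w S * mnl_denom vhat S" for S
  have m: "compact_of_distribution N vhat y = assortment_mixture N w"
    unfolding y_def by (rule compact_of_distribution_rescale)
  have "lp_objective CLP z \<le> lp_objective CLP (compact_of_distribution N vhat y)"
    unfolding lp_objective_def m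
    by (rule sum_compact_vars_mono_Y)
      (use w r_nonneg eps_nonneg vhat_pos in \<open>auto simp: compact_lp_coeffs intro!: mult_left_mono\<close>)
  then have "lp_objective CLP z \<le> lp_objective UCB y"
    by (simp only: compact_of_distribution_objective)
  moreover have "lp_row UCB (Some k) y \<le> lp_row CLP (Res k) z" if k: "k \<in> {1..K}" for k
  proof -
    have "lp_row CLP (Res k) (compact_of_distribution N vhat y) \<le> lp_row CLP (Res k) z"
      unfolding m
      by (rule sum_compact_vars_mono_Y)
        (use w a_nonneg eps_nonneg vhat_pos k in \<open>auto simp: compact_lp_coeffs intro!: mult_left_mono\<close>)
    then show ?thesis by (simp only: compact_of_distribution_row_Res)
  qed
  moreover have "y \<in> assortment_distributions N"
  proof -
    have "(\<Sum>S\<in>Pow {1..N}. y S) = lp_row CLP Norm (compact_of_distribution N vhat y)"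
      by (simp add: compact_of_distribution_row_Norm ucb_lp_sets ucb_lp_coeffs)
    also have "\<dots> = 1"
      using w assms by (simp add: m compact_row_Norm compact_polytope_def)
    finally show ?thesis
      using w(1) mnl_denom_pos_Pow by (auto simp: assortment_distributions_def y_def less_imp_le)
  qed
  ultimately show ?thesis using that by blast
qed

lemma ucb_to_compact:
  assumes "lp_feasible UCB y"
  shows "lp_feasible CLP (compact_of_distribution N vhat y)"
    and "lp_objective CLP (compact_of_distribution N vhat y) = lp_objective UCB y"
  using assms compact_of_distribution_mem
  by (simp_all add: lp_feasible_ucb_iff lp_feasible_compact_iff compact_of_distribution_row_Res
      compact_of_distribution_objective)

lemma compact_to_ucb:
  assumes "lp_feasible CLP z"
  shows "\<exists>y. lp_feasible UCB y \<and> lp_objective CLP z \<le> lp_objective UCB y"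
proof -
  from assms have "z \<in> compact_polytope N vhat" by (simp add: lp_feasible_compact_iff)
  then obtain y where "y \<in> assortment_distributions N" "lp_objective CLP z \<le> lp_objective UCB y"
    "\<forall>k\<in>{1..K}. lp_row UCB (Some k) y \<le> lp_row CLP (Res k) z"
    by (rule compact_polytope_dominated)
  with assms show ?thesis by (force simp: lp_feasible_ucb_iff lp_feasible_compact_iff)
qed

text \<open>Weak duality for the compact LP at the point of a single assortment \<open>S\<close> is the dual
  constraint of the UCB-LP for the variable \<open>S\<close>.\<close>

lemma compact_dual_to_ucb_dual:
  assumes u: "lp_dual_feasible CLP u"
  shows "\<exists>u'. lp_dual_feasible UCB u' \<and> (\<lambda>k\<in>{1..K}. u' (Some k)) = (\<lambda>k\<in>{1..K}. u (Res k))
    \<and> lp_dual_objective UCB u' = lp_dual_objective CLP u"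
proof -
  define u' where "u' = (\<lambda>con. case con of None \<Rightarrow> u Norm | Some k \<Rightarrow> u (Res k))"
  have res_nonneg: "0 \<le> u (Res k)" if "k \<in> {1..K}" for k
  proof -
    have "Res k \<in> lp_cons CLP - lp_eqs CLP" using that by (simp add: compact_lp_sets)
    then show ?thesis using u unfolding lp_dual_feasible_def by blast
  qed
  have "lp_dual_feasible UCB u'"
    unfolding lp_dual_feasible_def
  proof (intro conjI ballI)
    fix con assume "con \<in> lp_cons UCB - lp_eqs UCB"
    then show "0 \<le> u' con" using res_nonneg by (auto simp: ucb_lp_sets u'_def)
  next
    fix S assume S: "S \<in> lp_vars UCB"
    let ?z = "compact_of_distribution N vhat (\<lambda>S'. of_bool (S' = S))"
    have point: "(\<Sum>S'\<in>Pow {1..N}. f S' * of_bool (S' = S)) = f S" for f :: "nat set \<Rightarrow> real"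
      using S by (intro sum_Pow_indicator) (auto simp: ucb_lp_sets)
    have "(\<lambda>S'. of_bool (S' = S)) \<in> assortment_distributions N"
      using point[of "\<lambda>_. 1"] by (simp add: assortment_distributions_def)
    then have "lp_feasible (lp_relax CLP (compact_resources K)) ?z"
      by (simp add: lp_feasible_relax_compact_iff compact_of_distribution_mem)
    from lp_objective_le_partial_dual[OF finite_compact_lp _ u this]
    have "lp_objective CLP ?z \<le> (\<Sum>con\<in>compact_resources K. u con * lp_row CLP con ?z)
        + (\<Sum>con\<in>lp_cons CLP - compact_resources K. lp_rhs CLP con * u con)"
      by (auto simp: compact_resources_def compact_lp_sets)
    then have "lp_obj UCB S \<le> (\<Sum>k=1..K. u (Res k) * lp_mat UCB (Some k) S) + u Norm"
      unfolding compact_resources_def sum_Res compact_of_distribution_objective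
        compact_of_distribution_row_Res compact_lp_coeffs(3) sum_compact_structural_rhs
      unfolding lp_objective_def ucb_lp_sets(1) point .
    then show "if S \<in> lp_free UCB then lp_col UCB S u' = lp_obj UCB S else lp_obj UCB S \<le> lp_col UCB S u'"
      by (simp add: ucb_lp_sets(4) sum_ucb_cons u'_def ucb_lp_coeffs mult.commute)
  qed
  moreover have "(\<lambda>k\<in>{1..K}. u' (Some k)) = (\<lambda>k\<in>{1..K}. u (Res k))"
    by (simp add: u'_def)
  moreover have "lp_dual_objective UCB u' = lp_dual_objective CLP u"
    by (simp add: lp_dual_objective_ucb lp_dual_objective_compact u'_def)
  ultimately show ?thesis by blast
qed

lemma ucb_dual_resource_nonneg:
  assumes "lp_dual_feasible UCB u'" "k \<in> {1..K}"
  shows "0 \<le> u' (Some k)"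
proof -
  have "Some k \<in> lp_cons UCB - lp_eqs UCB" using assms(2) by (simp add: ucb_lp_sets)
  then show ?thesis using assms(1) unfolding lp_dual_feasible_def by blast
qed

text \<open>Compare with a dominating distribution and apply weak duality to the UCB-LP.\<close>

lemma compact_lagrangian_objective_le:
  assumes u': "lp_dual_feasible UCB u'"
    and z: "lp_feasible (lp_relax CLP (compact_resources K)) z"
  shows "lp_objective (lp_lagrangian CLP (compact_resources K) (compact_prices u')) z \<le> u' None"
proof -
  from z have "z \<in> compact_polytope N vhat" by (simp add: lp_feasible_relax_compact_iff)
  then obtain y where y: "y \<in> assortment_distributions N" "lp_objective CLP z \<le> lp_objective UCB y"
    "\<forall>k\<in>{1..K}. lp_row UCB (Some k) y \<le> lp_row CLP (Res k) z"
    by (rule compact_polytope_dominated)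
  have "lp_objective (lp_lagrangian CLP (compact_resources K) (compact_prices u')) z
      = lp_objective CLP z - (\<Sum>k=1..K. u' (Some k) * lp_row CLP (Res k) z)"
    using finite_compact_lp
    by (simp add: lp_objective_lagrangian compact_resources_def)
      (simp add: sum_Res compact_prices_def)
  also have "\<dots> \<le> lp_objective UCB y - (\<Sum>k=1..K. u' (Some k) * lp_row UCB (Some k) y)"
    using y(2,3) ucb_dual_resource_nonneg[OF u'] by (intro diff_mono sum_mono mult_left_mono) auto
  also have "\<dots> \<le> u' None"
  proof -
    have "lp_feasible (lp_relax UCB (ucb_resources K)) y"
      using y(1) by (simp add: lp_feasible_relax_ucb_iff)
    from lp_objective_le_partial_dual[OF finite_ucb_lp _ u' this]
    have "lp_objective UCB y \<le> (\<Sum>con\<in>ucb_resources K. u' con * lp_row UCB con y)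
        + (\<Sum>con\<in>lp_cons UCB - ucb_resources K. lp_rhs UCB con * u' con)"
      by (auto simp: ucb_resources_def ucb_lp_sets)
    also have "(\<Sum>con\<in>ucb_resources K. u' con * lp_row UCB con y)
        = (\<Sum>k=1..K. u' (Some k) * lp_row UCB (Some k) y)"
      unfolding ucb_resources_def by (simp only: sum.reindex[OF inj_Some] o_def)
    also have "lp_cons UCB - ucb_resources K = {None}"
      by (auto simp: ucb_resources_def ucb_lp_sets)
    finally show ?thesis by (simp add: ucb_lp_coeffs)
  qed
  finally show ?thesis .
qed

lemma ucb_dual_to_compact_dual:
  assumes u': "lp_dual_feasible UCB u'"
  shows "\<exists>u. lp_dual_feasible CLP u \<and> (\<lambda>k\<in>{1..K}. u (Res k)) = (\<lambda>k\<in>{1..K}. u' (Some k))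
    \<and> lp_dual_objective CLP u \<le> lp_dual_objective UCB u'"
proof -
  let ?R = "compact_resources K" and ?\<mu> = "compact_prices u'"
  let ?L = "lp_lagrangian CLP ?R ?\<mu>"
  have R: "?R \<subseteq> lp_cons CLP" "?R \<inter> lp_eqs CLP = {}"
    by (auto simp: compact_resources_def compact_lp_sets)
  have \<mu>_nonneg: "\<forall>con\<in>?R. 0 \<le> ?\<mu> con"
    using ucb_dual_resource_nonneg[OF u'] by (auto simp: compact_resources_def compact_prices_def)
  have "lp_feasible ?L (compact_of_distribution N vhat (\<lambda>S. of_bool (S = {})))"
    using empty_assortment_distribution
    by (simp add: lp_feasible_relax_compact_iff compact_of_distribution_mem)
  then obtain v where v: "lp_dual_feasible ?L v" "lp_dual_objective ?L v \<le> u' None"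
    using lp_strong_duality[of ?L _ "u' None"] compact_lagrangian_objective_le[OF u'] finite_compact_lp
    by auto
  define u where "u = (\<lambda>con. if con \<in> ?R then ?\<mu> con else v con)"
  have "lp_dual_feasible CLP u"
    and obj: "lp_dual_objective CLP u = (\<Sum>con\<in>?R. lp_rhs CLP con * ?\<mu> con) + lp_dual_objective ?L v"
    using lp_dual_feasible_of_lagrangian[OF finite_compact_lp(2) R \<mu>_nonneg v(1)]
    unfolding u_def by simp_all
  moreover have "(\<lambda>k\<in>{1..K}. u (Res k)) = (\<lambda>k\<in>{1..K}. u' (Some k))"
    by (rule restrict_ext) (simp add: u_def compact_prices_def compact_resources_def)
  moreover have "(\<Sum>con\<in>?R. lp_rhs CLP con * ?\<mu> con) = (\<Sum>k=1..K. (1 - \<omega>) * c k * u' (Some k))"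
    by (simp add: compact_resources_def sum_Res compact_lp_coeffs compact_prices_def)
  then have "lp_dual_objective CLP u \<le> lp_dual_objective UCB u'"
    using obj v(2) by (simp add: lp_dual_objective_ucb)
  ultimately show ?thesis by blast
qed

end

end

end

theorem theorem3:
  fixes N K :: nat
    and vhat r :: "nat \<Rightarrow> real"
    and a :: "nat \<Rightarrow> nat \<Rightarrow> real"
    and c :: "nat \<Rightarrow> real"
    and \<omega> \<Psi> :: real
    and n :: "nat \<Rightarrow> nat"
    and eps :: "nat \<Rightarrow> real"
  assumes vhat_pos: "\<forall>i\<in>{1..N}. 0 < vhat i"
    and r_bounds: "\<forall>i\<in>{1..N}. 0 \<le> r i \<and> r i \<le> 1"
    and a_bounds: "\<forall>i\<in>{1..N}. \<forall>k\<in>{1..K}. 0 \<le> a i k \<and> a i k \<le> 1"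
    and c_pos: "\<forall>k\<in>{1..K}. 0 < c k"
    and \<omega>_bounds: "0 \<le> \<omega>" "\<omega> < 1"
    and n_pos: "\<forall>i\<in>{1..N}. 0 < n i"
    and \<Psi>_pos: "0 < \<Psi>"
    and eps_def: "\<forall>i. eps i = (sqrt (real N) + 1) * \<Psi> / sqrt (real (n i))"
  shows "lp_value (ucb_lp N K vhat r a c \<omega> eps) = lp_value (compact_lp N K vhat r a c \<omega> eps)
    \<and> {(\<lambda>k\<in>{1..K}. u (Some k)) | u. lp_dual_optimal (ucb_lp N K vhat r a c \<omega> eps) u}
      = {(\<lambda>k\<in>{1..K}. u (Res k)) | u. lp_dual_optimal (compact_lp N K vhat r a c \<omega> eps) u}"
proof
  let ?U = "ucb_lp N K vhat r a c \<omega> eps" and ?C = "compact_lp N K vhat r a c \<omega> eps"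
  \<comment> \<open>Only the signs of \<open>r\<close>, \<open>a\<close> and \<open>eps\<close> matter.\<close>
  have nonneg: "\<forall>i\<in>{1..N}. 0 \<le> r i" "\<forall>i\<in>{1..N}. \<forall>k\<in>{1..K}. 0 \<le> a i k" "\<forall>i\<in>{1..N}. 0 \<le> eps i"
    using r_bounds a_bounds \<Psi>_pos by (simp_all add: eps_def)
  have "\<forall>k\<in>{1..K}. 0 \<le> (1 - \<omega>) * c k" using c_pos \<omega>_bounds by (simp add: less_imp_le)
  then show "lp_value ?U = lp_value ?C"
    by (rule lp_value_eqI[OF ucb_feasible_empty_assortment ucb_objective_bounded])
      (use ucb_to_compact[OF vhat_pos nonneg] compact_to_ucb[OF vhat_pos nonneg] in fastforce)+
  show "{(\<lambda>k\<in>{1..K}. u (Some k)) | u. lp_dual_optimal ?U u}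
      = {(\<lambda>k\<in>{1..K}. u (Res k)) | u. lp_dual_optimal ?C u}"
    by (rule lp_dual_optimal_image_eq[where f = "\<lambda>u. \<lambda>k\<in>{1..K}. u (Some k)"
          and g = "\<lambda>u. \<lambda>k\<in>{1..K}. u (Res k)"])
      (use ucb_dual_to_compact_dual[OF vhat_pos nonneg] compact_dual_to_ucb_dual[OF vhat_pos nonneg]
        in fastforce)+
qed

end
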